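(* Let $Q\in\mathbb{H}_{\mathbb{F}}$. Suppose that: (i) $L\in C^1(\mathbb{R}^2;\mathbb{R}^+\cup\{0\})$ is convex in $(x,v)$; (ii) $\Psi\in C^1(\mathbb{R};\mathbb{R}^+\cup\{0\})$ is convex; (iii) for some $C,\tilde C>0$, $\Psi(x)\leqslant C(1+|x|^2)$ and $|\Psi'(x)|\leqslant\tilde C(1+|x|)$ for all $x$; (iv) there exist $\tilde\beta,C>0$ with $L(x,v)\leqslant\tilde\beta(1+|v|^2)$ and $|L_x(x,v)|,|L_v(x,v)|\leqslant C(1+|v|)$ for all $(x,v)$; (v) for some $\alpha>0,\beta\geqslant0$, $\alpha|v|^2-\beta\leqslant L(x,v)$ for all $x,v$. Given an initial condition ${\bf x}_0\in\mathbb{R}^N$, there exists an optimal control ${\bf v}^*\in\mathbb{H}_{\mathbb{F}}^N$ attaining $\inf_{{\bf v}\in\mathbb{H}_{\mathbb{F}}^N}\frac1N\sum_{i=1}^N\mathbb{E}\left[\int_0^TL(X^i_t,v^i_t)dt+\Psi(X^i_T)\right]$ subject to $\frac1N\sum_{i=1}^Nv^i=Q$ and $d{\bf X}_t={\bf v}_tdt$, ${\bf X}_0={\bf x}_0$. Furthermore, if in addition for some $\theta>0$ the map $v\mapsto L(x,v)-\frac{\theta}{2}|v|^2$ is convex for all $x\in\mathbb{R}$, then ${\bf v}^*$ is unique.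
   Context: $\mathbb{F}$ is the standard filtration generated by a one-dimensional Brownian motion on $[0,T]$; $\mathbb{H}_{\mathbb{F}}$ is the Hilbert space of measurable $\mathbb{F}$-adapted real processes with $\mathbb{E}[\int_0^Tv_t^2dt]<\infty$; $\mathbb{H}_{\mathbb{F}}^N$ is its $N$-fold product with the sum inner product; ${\bf v}=(v^1,\dots,v^N)$, ${\bf X}=(X^1,\dots,X^N)$. *)

theory Defs
  imports "HOL-Probability.Probability"
begin

definition nat_filt :: "'a measure \<Rightarrow> (real \<Rightarrow> 'a \<Rightarrow> real) \<Rightarrow> real \<Rightarrow> 'a set set" where
  "nat_filt M B t = sigma_sets (space M)
     (\<Union>r\<in>{0..t}. {B r -` A \<inter> space M | A. A \<in> sets borel})"

definition brownian_motion :: "'a measure \<Rightarrow> real \<Rightarrow> (real \<Rightarrow> 'a \<Rightarrow> real) \<Rightarrow> bool" where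
  "brownian_motion M T B \<longleftrightarrow> prob_space M \<and> 0 < T \<and>
     (\<forall>t\<in>{0..T}. B t \<in> borel_measurable M) \<and>
     (AE \<omega> in M. B 0 \<omega> = 0 \<and> continuous_on {0..T} (\<lambda>t. B t \<omega>)) \<and>
     (\<forall>s t. 0 \<le> s \<longrightarrow> s < t \<longrightarrow> t \<le> T \<longrightarrow>
        distributed M lborel (\<lambda>\<omega>. B t \<omega> - B s \<omega>)
          (\<lambda>x. ennreal (normal_density 0 (sqrt (t - s)) x)) \<and>
        prob_space.indep_set M
          (sigma_sets (space M) {(\<lambda>\<omega>. B t \<omega> - B s \<omega>) -` A \<inter> space M | A. A \<in> sets borel})
          (nat_filt M B s))"

definition std_filt :: "'a measure \<Rightarrow> (real \<Rightarrow> 'a \<Rightarrow> real) \<Rightarrow> real \<Rightarrow> 'a measure" where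
  "std_filt M B t = sigma (space M) (nat_filt M B t \<union> null_sets M)"

definition tP :: "'a measure \<Rightarrow> real \<Rightarrow> (real \<times> 'a) measure" where
  "tP M T = restrict_space lborel {0..T} \<Otimes>\<^sub>M M"

definition HF :: "'a measure \<Rightarrow> (real \<Rightarrow> 'a \<Rightarrow> real) \<Rightarrow> real \<Rightarrow> (real \<Rightarrow> 'a \<Rightarrow> real) set" where
  "HF M B T = {v. (\<lambda>(t,\<omega>). v t \<omega>) \<in> borel_measurable (tP M T) \<and>
      (\<forall>t\<in>{0..T}. v t \<in> borel_measurable (std_filt M B t)) \<and>
      (\<integral>\<^sup>+ p. ennreal ((v (fst p) (snd p))\<^sup>2) \<partial>(tP M T)) < \<infinity>}"

definition state :: "real \<Rightarrow> (real \<Rightarrow> 'a \<Rightarrow> real) \<Rightarrow> real \<Rightarrow> 'a \<Rightarrow> real" where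
  "state x0 v t \<omega> = x0 + (LINT s:{0..t}|lborel. v s \<omega>)"

definition cost :: "'a measure \<Rightarrow> real \<Rightarrow> nat \<Rightarrow> (real \<Rightarrow> real \<Rightarrow> real) \<Rightarrow> (real \<Rightarrow> real)
    \<Rightarrow> (nat \<Rightarrow> real) \<Rightarrow> (nat \<Rightarrow> real \<Rightarrow> 'a \<Rightarrow> real) \<Rightarrow> ennreal" where
  "cost M T N L \<Psi> x0 v = ennreal (1 / real N) *
     (\<Sum>i<N. \<integral>\<^sup>+ \<omega>. ((\<integral>\<^sup>+ t\<in>{0..T}. ennreal (L (state (x0 i) (v i) t \<omega>) (v i t \<omega>)) \<partial>lborel)
                     + ennreal (\<Psi> (state (x0 i) (v i) T \<omega>))) \<partial>M)"

definition admissible :: "'a measure \<Rightarrow> (real \<Rightarrow> 'a \<Rightarrow> real) \<Rightarrow> real \<Rightarrow> nat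
    \<Rightarrow> (real \<Rightarrow> 'a \<Rightarrow> real) \<Rightarrow> (nat \<Rightarrow> real \<Rightarrow> 'a \<Rightarrow> real) \<Rightarrow> bool" where
  "admissible M B T N Q v \<longleftrightarrow> (\<forall>i<N. v i \<in> HF M B T) \<and>
     (AE p in tP M T. (1 / real N) * (\<Sum>i<N. v i (fst p) (snd p)) = Q (fst p) (snd p))"

end

(*
  The growth bound on L makes x \<mapsto> L(x,v) convex and bounded above, hence constant, so the state
  enters the cost only through the terminal term \<Psi>(x0 + \<integral>\<^sub>0\<^sup>T v dt).

  Existence is a direct method without weak compactness. The \<epsilon>-minimizers form nested
  midpoint-convex sets (convexity of L and \<Psi>, linearity of the constraint); choosing in each of
  them a control of almost minimal L\<^sup>2-norm gives, by the parallelogram identity, a sequence that is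
  Cauchy in L\<^sup>2(dt \<times> dP) at a geometric rate. Such a sequence converges dt \<times> dP-almost
  everywhere and, for almost every \<omega>, in L\<^sup>1(dt), so its limit is again adapted and admissible,
  and Fatou's lemma together with the continuity of \<Psi> shows that it is a minimizer.

  Uniqueness: if L(x,\<cdot>) - \<theta>/2 |\<cdot>|\<^sup>2 is convex, the midpoint of two minimizers has cost
  smaller than the minimum by \<theta>/8 times their mean squared L\<^sup>2-distance.
*)
theory Submission
  imports Defs
begin

section \<open>Convexity, limits inferior and fast Cauchy sequences\<close>

lemma convex_on_bounded_above_le:
  fixes f :: "real \<Rightarrow> real"
  assumes convex: "convex_on UNIV f" and bounded: "\<And>x. f x \<le> K"
  shows "f x \<le> f y"
proof -
  have "f x \<le> (1 - s) * f y + s * K" if s: "0 < s" "s < 1" for s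
  proof -
    define z where "z = y + (x - y) / s"
    have "x = (1 - s) *\<^sub>R y + s *\<^sub>R z"
      using s by (simp add: z_def field_simps)
    then have "f x \<le> (1 - s) * f y + s * f z"
      using convex_onD[OF convex, of s y z] s by simp
    also have "\<dots> \<le> (1 - s) * f y + s * K"
      using bounded[of z] s by simp
    finally show ?thesis .
  qed
  then have "eventually (\<lambda>s. f x \<le> (1 - s) * f y + s * K) (at_right 0)"
    by (auto simp: eventually_at_right_field intro: exI[of _ 1])
  moreover have "((\<lambda>s. (1 - s) * f y + s * K) \<longlongrightarrow> f y) (at_right 0)"
    by (auto intro!: tendsto_eq_intros)
  ultimately show ?thesis
    by (intro tendsto_lowerbound) auto
qed

lemma convex_on_slices:
  fixes f :: "real \<Rightarrow> real \<Rightarrow> real"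
  assumes "convex_on UNIV (\<lambda>p. f (fst p) (snd p))"
  shows "convex_on UNIV (\<lambda>x. f x v)" and "convex_on UNIV (\<lambda>v. f x v)"
  using convex_onD[OF assms, of _ "(_, v)" "(_, v)"] convex_onD[OF assms, of _ "(x, _)" "(x, _)"]
  by (auto intro!: convex_onI simp: algebra_simps)

lemma convex_on_bounded_above_independent_fst:
  fixes L :: "real \<Rightarrow> real \<Rightarrow> real"
  assumes "convex_on UNIV (\<lambda>p. L (fst p) (snd p))" and "\<And>x v. L x v \<le> g v"
  shows "L x v = L 0 v"
  using convex_on_bounded_above_le[OF convex_on_slices(1)[OF assms(1)] assms(2)]
  by (metis order_antisym)

lemma convex_on_minus_square_midpoint:
  fixes f :: "real \<Rightarrow> real"
  assumes "convex_on UNIV (\<lambda>v. f v - \<theta> / 2 * v\<^sup>2)"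
  shows "2 * f ((a + b) / 2) + \<theta> / 4 * (a - b)\<^sup>2 \<le> f a + f b"
proof -
  have "f ((a + b) / 2) - \<theta> / 2 * ((a + b) / 2)\<^sup>2
      \<le> (f a - \<theta> / 2 * a\<^sup>2) / 2 + (f b - \<theta> / 2 * b\<^sup>2) / 2"
    using convex_onD[OF assms, of "1/2" a b] by (simp add: add_divide_distrib)
  moreover have "\<theta> / 4 * (a - b)\<^sup>2 = \<theta> / 2 * a\<^sup>2 + \<theta> / 2 * b\<^sup>2 - 2 * (\<theta> / 2 * ((a + b) / 2)\<^sup>2)"
    by (simp add: power2_eq_square field_simps)
  ultimately show ?thesis
    by argo
qed

lemma nn_integral_midpoint_le:
  fixes f :: "real \<Rightarrow> real" and u w :: "'b \<Rightarrow> real"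
  assumes [measurable]: "u \<in> borel_measurable \<mu>" "w \<in> borel_measurable \<mu>"
    "f \<in> borel_measurable borel"
    and f_nonneg: "\<And>v. 0 \<le> f v" and "0 \<le> \<kappa>"
    and f_midpoint: "\<And>a b. 2 * f ((a + b) / 2) + \<kappa> * (a - b)\<^sup>2 \<le> f a + f b"
  shows "2 * (\<integral>\<^sup>+x. ennreal (f ((u x + w x) / 2)) \<partial>\<mu>)
      + ennreal \<kappa> * (\<integral>\<^sup>+x. ennreal ((u x - w x)\<^sup>2) \<partial>\<mu>)
    \<le> (\<integral>\<^sup>+x. ennreal (f (u x)) \<partial>\<mu>) + (\<integral>\<^sup>+x. ennreal (f (w x)) \<partial>\<mu>)"
proof -
  have "2 * ennreal (f ((a + b) / 2)) + ennreal \<kappa> * ennreal ((a - b)\<^sup>2)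
      \<le> ennreal (f a) + ennreal (f b)" for a b
  proof -
    have "2 * ennreal (f ((a + b) / 2)) + ennreal \<kappa> * ennreal ((a - b)\<^sup>2)
        = ennreal (2 * f ((a + b) / 2) + \<kappa> * (a - b)\<^sup>2)"
      using f_nonneg \<open>0 \<le> \<kappa>\<close> by (simp add: numeral_mult_ennreal flip: ennreal_plus ennreal_mult)
    also have "\<dots> \<le> ennreal (f a + f b)"
      using f_midpoint by (rule ennreal_leI)
    finally show ?thesis
      using f_nonneg by simp
  qed
  then have "(\<integral>\<^sup>+x. 2 * ennreal (f ((u x + w x) / 2)) + ennreal \<kappa> * ennreal ((u x - w x)\<^sup>2) \<partial>\<mu>)
      \<le> (\<integral>\<^sup>+x. ennreal (f (u x)) + ennreal (f (w x)) \<partial>\<mu>)"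
    by (intro nn_integral_mono)
  then show ?thesis
    by (simp add: nn_integral_add nn_integral_cmult)
qed

lemma liminf_add_ennreal:
  fixes f g :: "nat \<Rightarrow> ennreal"
  shows "liminf f + liminf g \<le> liminf (\<lambda>n. f n + g n)"
proof -
  let ?a = "\<lambda>n. INF k\<in>{n..}. f k" and ?b = "\<lambda>n. INF k\<in>{n..}. g k"
  have "incseq ?a" "incseq ?b"
    by (auto simp: incseq_def intro!: INF_superset_mono)
  then have "liminf f + liminf g = (SUP n. ?a n + ?b n)"
    unfolding liminf_SUP_INF by (simp add: ennreal_SUP_add)
  also have "\<dots> \<le> (SUP n. INF k\<in>{n..}. f k + g k)"
    by (intro SUP_mono) (auto intro!: INF_greatest add_mono INF_lower)
  finally show ?thesis
    unfolding liminf_SUP_INF .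
qed

lemma liminf_sum_ennreal:
  fixes f :: "'i \<Rightarrow> nat \<Rightarrow> ennreal"
  assumes "finite I"
  shows "(\<Sum>i\<in>I. liminf (f i)) \<le> liminf (\<lambda>n. \<Sum>i\<in>I. f i n)"
  using assms
proof (induction I rule: finite_induct)
  case (insert x F)
  have "(\<Sum>i\<in>insert x F. liminf (f i)) \<le> liminf (f x) + liminf (\<lambda>n. \<Sum>i\<in>F. f i n)"
    using insert by (simp add: add_left_mono)
  also have "\<dots> \<le> liminf (\<lambda>n. \<Sum>i\<in>insert x F. f i n)"
    using insert liminf_add_ennreal[of "f x"] by simp
  finally show ?case .
qed simp

lemma liminf_cmult_ennreal:
  fixes f :: "nat \<Rightarrow> ennreal"
  assumes "c < top"
  shows "liminf (\<lambda>n. c * f n) = c * liminf f"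
  using Liminf_compose_continuous_mono[of "\<lambda>x. c * x" sequentially f]
    ennreal_continuous_on_cmult[OF assms continuous_on_id]
  by (simp add: mono_def mult_left_mono)

lemma liminf_le_if_le_plus_inverse:
  fixes f :: "nat \<Rightarrow> ennreal"
  assumes "\<And>j. f j \<le> m + ennreal (1 / Suc j)"
  shows "liminf f \<le> m"
proof -
  have "(\<lambda>j. m + ennreal (1 / Suc j)) \<longlonglongrightarrow> m + ennreal 0"
    by (intro tendsto_add tendsto_const tendsto_ennrealI
        LIMSEQ_inverse_real_of_nat[unfolded inverse_eq_divide])
  then have "liminf (\<lambda>j. m + ennreal (1 / Suc j)) = m"
    by (simp add: lim_imp_Liminf)
  moreover have "liminf f \<le> liminf (\<lambda>j. m + ennreal (1 / Suc j))"
    using assms by (intro Liminf_mono) simp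
  ultimately show ?thesis
    by simp
qed

lemma abs_le_half_power_plus_scaled_sq:
  fixes d :: real
  shows "\<bar>d\<bar> \<le> (1/2)^j + 2^j * d\<^sup>2"
proof (cases "\<bar>d\<bar> \<le> (1/2)^j")
  case False
  then have "1 < 2^j * \<bar>d\<bar>"
    by (simp add: power_one_over field_simps)
  then have "\<bar>d\<bar> \<le> (2^j * \<bar>d\<bar>) * \<bar>d\<bar>"
    by (simp add: mult_le_cancel_right1)
  also have "\<dots> = 2^j * d\<^sup>2"
    by (simp add: power2_eq_square)
  finally show ?thesis
    using zero_le_power[of "1/2::real" j] by linarith
qed (simp add: add_increasing2)

lemma convergent_if_weighted_sq_increments_summable:
  fixes a :: "nat \<Rightarrow> real"
  defines "S \<equiv> \<Sum>j. ennreal (2^j * (a (Suc j) - a j)\<^sup>2)"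
  assumes finite: "S \<noteq> \<infinity>"
  shows "convergent a" and "\<bar>a n\<bar> \<le> \<bar>a 0\<bar> + 2 + enn2real S"
proof -
  define d where "d j = a (Suc j) - a j" for j
  define e where "e j = 2^j * (d j)\<^sup>2" for j
  have e_nonneg: "0 \<le> e j" for j
    unfolding e_def by simp
  have S_eq: "S = (\<Sum>j. ennreal (e j))"
    unfolding S_def e_def d_def ..
  have summable_e: "summable e"
    using finite e_nonneg unfolding S_eq by (intro summable_suminf_not_top) simp_all
  have enn2real_S: "enn2real S = suminf e"
    unfolding S_eq suminf_ennreal2[OF e_nonneg summable_e]
    using suminf_nonneg[OF summable_e e_nonneg] by simp
  have d_le: "\<bar>d j\<bar> \<le> (1/2)^j + e j" for j
    unfolding e_def by (rule abs_le_half_power_plus_scaled_sq)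
  have summable_bound: "summable (\<lambda>j. (1/2::real)^j + e j)"
    by (intro summable_add summable_geometric summable_e) simp
  have "summable (\<lambda>j. \<bar>d j\<bar>)"
    by (rule summable_comparison_test'[OF summable_bound, of 0]) (use d_le in simp)
  then have summable_d: "summable d"
    by (rule summable_rabs_cancel)
  have telescope: "a n = a 0 + (\<Sum>j<n. d j)" for n
    unfolding d_def by (simp add: sum_lessThan_telescope)
  have "(\<lambda>n. a 0 + (\<Sum>j<n. d j)) \<longlonglongrightarrow> a 0 + suminf d"
    by (intro tendsto_add tendsto_const summable_LIMSEQ summable_d)
  then show "convergent a"
    unfolding telescope[symmetric] convergent_def by blast
  have "\<bar>a n\<bar> \<le> \<bar>a 0\<bar> + (\<Sum>j<n. \<bar>d j\<bar>)"
    unfolding telescope[of n] by (rule order_trans[OF abs_triangle_ineq]) (simp add: sum_abs)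
  also have "(\<Sum>j<n. \<bar>d j\<bar>) \<le> (\<Sum>j<n. (1/2::real)^j + e j)"
    by (intro sum_mono d_le)
  also have "\<dots> \<le> (\<Sum>j. (1/2::real)^j + e j)"
    by (rule sum_le_suminf[OF summable_bound]) (auto intro: add_nonneg_nonneg e_nonneg)
  also have "\<dots> = 2 + suminf e"
    using suminf_add[OF summable_geometric[of "1/2::real"] summable_e]
      suminf_geometric[of "1/2::real"] by simp
  finally show "\<bar>a n\<bar> \<le> \<bar>a 0\<bar> + 2 + enn2real S"
    unfolding enn2real_S by simp
qed

lemma nn_integral_weighted_sq_increments_le:
  fixes f :: "nat \<Rightarrow> 'b \<Rightarrow> real"
  assumes [measurable]: "\<And>j. f j \<in> borel_measurable \<mu>"
    and increments: "\<And>j. (\<integral>\<^sup>+x. ennreal ((f (Suc j) x - f j x)\<^sup>2) \<partial>\<mu>) \<le> ennreal ((1/4)^j)"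
  shows "(\<integral>\<^sup>+x. (\<Sum>j. ennreal (2^j * (f (Suc j) x - f j x)\<^sup>2)) \<partial>\<mu>) \<le> 2"
proof -
  have "(\<integral>\<^sup>+x. (\<Sum>j. ennreal (2^j * (f (Suc j) x - f j x)\<^sup>2)) \<partial>\<mu>)
      = (\<Sum>j. ennreal (2^j) * \<integral>\<^sup>+x. ennreal ((f (Suc j) x - f j x)\<^sup>2) \<partial>\<mu>)"
    by (subst nn_integral_suminf) (auto simp: nn_integral_cmult ennreal_mult)
  also have "\<dots> \<le> (\<Sum>j. ennreal (2^j) * ennreal ((1/4)^j))"
    by (intro suminf_le mult_left_mono increments) auto
  also have "\<dots> = (\<Sum>j. ennreal ((1/2)^j))"
  proof -
    have "(2::real)^j * (1/4)^j = (1/2)^j" for j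
      by (simp flip: power_mult_distrib)
    then show ?thesis
      by (simp flip: ennreal_mult)
  qed
  also have "\<dots> = ennreal (\<Sum>j. (1/2)^j)"
    by (rule suminf_ennreal2) (simp_all add: summable_geometric)
  also have "(\<Sum>j. (1/2::real)^j) = 2"
    using suminf_geometric[of "1/2::real"] by simp
  finally show ?thesis
    by simp
qed

lemma AE_convergent_if_weighted_sq_increments:
  fixes f :: "nat \<Rightarrow> 'b \<Rightarrow> real"
  assumes [measurable]: "\<And>j. f j \<in> borel_measurable \<mu>"
    and finite: "(\<integral>\<^sup>+x. (\<Sum>j. ennreal (2^j * (f (Suc j) x - f j x)\<^sup>2)) \<partial>\<mu>) \<noteq> \<infinity>"
  shows "AE x in \<mu>. (\<lambda>j. f j x) \<longlonglongrightarrow> lim (\<lambda>j. f j x)"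
proof -
  have "(\<lambda>x. \<Sum>j. ennreal (2^j * (f (Suc j) x - f j x)\<^sup>2)) \<in> borel_measurable \<mu>"
    by measurable
  from nn_integral_noteq_infinite[OF this finite] show ?thesis
    by eventually_elim (simp add: convergent_LIMSEQ_iff[symmetric]
        convergent_if_weighted_sq_increments_summable(1))
qed

lemma integral_tendsto_if_weighted_sq_increments:
  fixes f :: "nat \<Rightarrow> 'b \<Rightarrow> real"
  defines "H \<equiv> \<lambda>x. \<Sum>j. ennreal (2^j * (f (Suc j) x - f j x)\<^sup>2)"
  assumes "finite_measure \<mu>" and [measurable]: "\<And>j. f j \<in> borel_measurable \<mu>"
    and "integrable \<mu> (f 0)" and finite: "(\<integral>\<^sup>+x. H x \<partial>\<mu>) \<noteq> \<infinity>"
  shows "(\<lambda>j. \<integral>x. f j x \<partial>\<mu>) \<longlonglongrightarrow> (\<integral>x. lim (\<lambda>j. f j x) \<partial>\<mu>)"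
proof (rule integral_dominated_convergence)
  have "(\<integral>\<^sup>+x. ennreal (norm (enn2real (H x))) \<partial>\<mu>) \<le> (\<integral>\<^sup>+x. H x \<partial>\<mu>)"
    by (intro nn_integral_mono) (simp add: ennreal_enn2real_if)
  then have "integrable \<mu> (\<lambda>x. enn2real (H x))"
    using finite unfolding H_def by (subst integrable_iff_bounded) (auto simp: less_top)
  then show "integrable \<mu> (\<lambda>x. \<bar>f 0 x\<bar> + 2 + enn2real (H x))"
    using \<open>integrable \<mu> (f 0)\<close> \<open>finite_measure \<mu>\<close>
    by (intro Bochner_Integration.integrable_add integrable_abs finite_measure.integrable_const)
  show "AE x in \<mu>. (\<lambda>j. f j x) \<longlonglongrightarrow> lim (\<lambda>j. f j x)"
    using finite unfolding H_def by (rule AE_convergent_if_weighted_sq_increments[rotated]) simp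
  have "H \<in> borel_measurable \<mu>"
    unfolding H_def by measurable
  from nn_integral_noteq_infinite[OF this finite]
  show "AE x in \<mu>. norm (f j x) \<le> \<bar>f 0 x\<bar> + 2 + enn2real (H x)" for j
  proof eventually_elim
    case (elim x)
    then show ?case
      using convergent_if_weighted_sq_increments_summable(2)[of "\<lambda>j. f j x" j] by (simp add: H_def)
  qed
qed auto

section \<open>Minimizing sequences from the parallelogram identity\<close>

lemma parallelogram_dist_le:
  fixes Dist Nu Nw Nm :: ennreal
  assumes parallelogram: "Dist + 4 * Nm = 2 * Nu + 2 * Nw"
    and "ennreal d \<le> Nm" "Nu \<le> ennreal (d + e)" "Nw \<le> ennreal (D + e)"
    and "0 \<le> d" "d \<le> D" "0 \<le> e"
  shows "Dist \<le> ennreal (2 * (D - d) + 4 * e)"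
proof -
  have "Dist + ennreal (4 * d) \<le> Dist + 4 * Nm"
    using assms(2,5) by (simp add: ennreal_mult add_left_mono mult_left_mono)
  also have "\<dots> \<le> 2 * ennreal (d + e) + 2 * ennreal (D + e)"
    unfolding parallelogram using assms(3,4) by (intro add_mono mult_left_mono) auto
  also have "\<dots> = ennreal (2 * (d + e) + 2 * (D + e))"
    using assms(5-7) by (subst ennreal_plus) (auto simp: ennreal_mult)
  also have "\<dots> = ennreal (2 * (D - d) + 4 * e + 4 * d)"
    by (simp add: algebra_simps)
  finally show ?thesis
    using assms(5) by (metis add_diff_cancel_right' ennreal_le_minus_iff ennreal_minus
        mult_nonneg_nonneg zero_le_numeral)
qed

lemma fast_subsequence:
  fixes Dist :: "nat \<Rightarrow> nat \<Rightarrow> ennreal"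
  assumes bound: "\<And>n k. n \<le> k \<Longrightarrow> Dist n k \<le> ennreal (g n)"
    and g: "g \<longlonglongrightarrow> 0" and c: "\<And>j. 0 < c j"
  obtains r where "\<And>j. j \<le> r j" and "\<And>j. Dist (r j) (r (Suc j)) \<le> ennreal (c j)"
proof -
  have "\<exists>n0. \<forall>n\<ge>n0. g n < c j" for j
    using order_tendstoD(2)[OF g c] unfolding eventually_sequentially .
  then obtain n0 where n0: "\<And>j n. n0 j \<le> n \<Longrightarrow> g n < c j"
    by metis
  define r where "r j = (\<Sum>i\<le>j. n0 i) + j" for j
  have "n0 j \<le> r j" and "r j \<le> r (Suc j)" for j
    unfolding r_def using member_le_sum[of j "{..j}" n0] by simp_all
  then have "Dist (r j) (r (Suc j)) \<le> ennreal (c j)" for j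
    using bound n0 by (meson ennreal_leI less_imp_le order_trans)
  moreover have "j \<le> r j" for j
    unfolding r_def by simp
  ultimately show thesis
    using that by blast
qed

lemma bounded_incseq_ennreal_real:
  fixes d :: "nat \<Rightarrow> ennreal"
  assumes "incseq d" and "\<And>n. d n \<le> ennreal K"
  obtains r D where "\<And>n. d n = ennreal (r n)" and "\<And>n. 0 \<le> r n" and "\<And>n. r n \<le> D"
    and "r \<longlonglongrightarrow> D"
proof -
  have "(SUP n. d n) \<le> ennreal K"
    by (intro SUP_least assms(2))
  then obtain D where D_eq: "(SUP n. d n) = ennreal D" and "0 \<le> D"
    using ennreal_cases[of "SUP n. d n"] by (metis ennreal_neq_top neq_top_trans)
  define r where "r n = enn2real (d n)" for n
  have "d n = ennreal (r n)" "0 \<le> r n" "r n \<le> D" for n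
    unfolding r_def using SUP_upper[of n UNIV d] \<open>0 \<le> D\<close> unfolding D_eq
    by (auto simp: enn2real_leI) (metis ennreal_enn2real_if ennreal_less_top leD)
  moreover have "d \<longlonglongrightarrow> ennreal D"
    using LIMSEQ_SUP[OF assms(1)] unfolding D_eq .
  then have "r \<longlonglongrightarrow> D"
    using tendsto_enn2real \<open>0 \<le> D\<close> unfolding r_def[abs_def] by blast
  ultimately show thesis
    using that by blast
qed

lemma nested_nearly_minimal_selection:
  fixes C :: "nat \<Rightarrow> 'v set" and Nm :: "'v \<Rightarrow> ennreal"
  assumes antimono: "\<And>n k. n \<le> k \<Longrightarrow> C k \<subseteq> C n" and nonempty: "\<And>n. C n \<noteq> {}"
    and bounded: "\<And>u. u \<in> C 0 \<Longrightarrow> Nm u \<le> ennreal K"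
  obtains W d D where "\<And>n. W n \<in> C n" and "\<And>n u. u \<in> C n \<Longrightarrow> ennreal (d n) \<le> Nm u"
    and "\<And>n. Nm (W n) \<le> ennreal (d n + 1 / Suc n)" and "\<And>n. 0 \<le> d n" and "\<And>n. d n \<le> D"
    and "d \<longlonglongrightarrow> D"
proof -
  define d where "d n = (INF w\<in>C n. Nm w)" for n
  have d_le: "u \<in> C n \<Longrightarrow> d n \<le> Nm u" for u n
    unfolding d_def by (rule INF_lower)
  have d_incseq: "incseq d"
    unfolding incseq_def d_def by (auto intro!: INF_superset_mono antimono)
  have d_bounded: "d n \<le> ennreal K" for n
  proof -
    obtain u where "u \<in> C n"
      using nonempty[of n] by blast
    then show ?thesis
      using d_le[of u n] bounded[of u] antimono[of 0 n] by auto
  qed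
  obtain dr D where d_eq: "\<And>n. d n = ennreal (dr n)" and dr: "\<And>n. 0 \<le> dr n" "\<And>n. dr n \<le> D" "dr \<longlonglongrightarrow> D"
    using bounded_incseq_ennreal_real[OF d_incseq d_bounded] by blast
  have "\<exists>w. w \<in> C n \<and> Nm w \<le> ennreal (dr n + 1 / Suc n)" for n
  proof -
    have "d n < ennreal (dr n + 1 / Suc n)"
      using d_eq[of n] dr(1)[of n] by simp
    then show ?thesis
      unfolding d_def by (auto simp: INF_less_iff less_imp_le)
  qed
  then obtain W where "\<And>n. W n \<in> C n" "\<And>n. Nm (W n) \<le> ennreal (dr n + 1 / Suc n)"
    by metis
  with d_le d_eq dr show thesis
    by (intro that) auto
qed

text \<open>In nested midpoint-convex sets, elements of almost minimal norm are close to each other, as in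
  the construction of the nearest point of a closed convex subset of a Hilbert space.\<close>

lemma nested_midpoint_convex_fast_Cauchy:
  fixes C :: "nat \<Rightarrow> 'v set" and Nm :: "'v \<Rightarrow> ennreal" and Dist :: "'v \<Rightarrow> 'v \<Rightarrow> ennreal"
    and mid :: "'v \<Rightarrow> 'v \<Rightarrow> 'v"
  assumes antimono: "\<And>n k. n \<le> k \<Longrightarrow> C k \<subseteq> C n" and nonempty: "\<And>n. C n \<noteq> {}"
    and mid_closed: "\<And>n u w. u \<in> C n \<Longrightarrow> w \<in> C n \<Longrightarrow> mid u w \<in> C n"
    and parallelogram:
      "\<And>u w. u \<in> C 0 \<Longrightarrow> w \<in> C 0 \<Longrightarrow> Dist u w + 4 * Nm (mid u w) = 2 * Nm u + 2 * Nm w"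
    and bounded: "\<And>u. u \<in> C 0 \<Longrightarrow> Nm u \<le> ennreal K"
  obtains z where "\<And>j. z j \<in> C j" and "\<And>j. Dist (z j) (z (Suc j)) \<le> ennreal ((1/4)^j)"
proof -
  obtain W d D where W_C: "\<And>n. W n \<in> C n" and d_le: "\<And>n u. u \<in> C n \<Longrightarrow> ennreal (d n) \<le> Nm u"
    and W_le: "\<And>n. Nm (W n) \<le> ennreal (d n + 1 / Suc n)"
    and d: "\<And>n. 0 \<le> d n" "\<And>n. d n \<le> D" "d \<longlonglongrightarrow> D"
    using nested_nearly_minimal_selection[of C Nm K, OF antimono nonempty bounded] by blast
  have "Dist (W n) (W k) \<le> ennreal (2 * (D - d n) + 4 * (1 / Suc n))" if "n \<le> k" for n k
  proof (rule parallelogram_dist_le)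
    have "W n \<in> C n" "W k \<in> C n"
      using W_C antimono[OF that] by blast+
    then show "Dist (W n) (W k) + 4 * Nm (mid (W n) (W k)) = 2 * Nm (W n) + 2 * Nm (W k)"
      and "ennreal (d n) \<le> Nm (mid (W n) (W k))"
      using parallelogram antimono[of 0 n] mid_closed d_le by auto
    have "ennreal (d k + 1 / Suc k) \<le> ennreal (D + 1 / Suc n)"
      using d(2)[of k] that by (intro ennreal_leI add_mono) (auto simp: frac_le)
    with W_le[of k] show "Nm (W k) \<le> ennreal (D + 1 / Suc n)"
      by (rule order_trans)
  qed (use W_le d(1,2) in auto)
  moreover have "(\<lambda>n. 2 * (D - d n) + 4 * (1 / Suc n)) \<longlonglongrightarrow> 0"
  proof -
    have "(\<lambda>n. 2 * (D - d n) + 4 * (1 / Suc n)) \<longlonglongrightarrow> 2 * (D - D) + 4 * 0"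
      using d(3) by (intro tendsto_intros LIMSEQ_inverse_real_of_nat[unfolded inverse_eq_divide])
    then show ?thesis
      by simp
  qed
  ultimately obtain r where "\<And>j. j \<le> r j" "\<And>j. Dist (W (r j)) (W (r (Suc j))) \<le> ennreal ((1/4)^j)"
    by (rule fast_subsequence[where c = "\<lambda>j. (1/4)^j"]) auto
  with W_C antimono show thesis
    by (intro that[of "W \<circ> r"]) auto
qed

lemma fast_minimizing_sequence:
  fixes A :: "'v set" and J Nm :: "'v \<Rightarrow> ennreal" and Dist :: "'v \<Rightarrow> 'v \<Rightarrow> ennreal"
    and mid :: "'v \<Rightarrow> 'v \<Rightarrow> 'v"
  defines "m \<equiv> INF v\<in>A. J v"
  assumes finite: "m < \<infinity>"
    and mid_closed: "\<And>u w. u \<in> A \<Longrightarrow> w \<in> A \<Longrightarrow> mid u w \<in> A"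
    and mid_convex: "\<And>u w. u \<in> A \<Longrightarrow> w \<in> A \<Longrightarrow> 2 * J (mid u w) \<le> J u + J w"
    and parallelogram:
      "\<And>u w. u \<in> A \<Longrightarrow> w \<in> A \<Longrightarrow> Dist u w + 4 * Nm (mid u w) = 2 * Nm u + 2 * Nm w"
    and bounded: "\<And>u. u \<in> A \<Longrightarrow> J u \<le> m + 1 \<Longrightarrow> Nm u \<le> ennreal K"
  obtains z where "\<And>j. z j \<in> A" and "\<And>j. J (z j) \<le> m + ennreal (1 / Suc j)"
    and "\<And>j. Dist (z j) (z (Suc j)) \<le> ennreal ((1/4)^j)" and "\<And>j. Nm (z j) \<le> ennreal K"
proof -
  define C where "C n = {w\<in>A. J w \<le> m + ennreal (1 / Suc n)}" for n
  have C_antimono: "C k \<subseteq> C n" if "n \<le> k" for n k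
  proof -
    have "m + ennreal (1 / Suc k) \<le> m + ennreal (1 / Suc n)"
      using that by (intro add_left_mono ennreal_leI) (simp add: frac_le)
    then show ?thesis
      unfolding C_def by (auto intro: order_trans)
  qed
  have C_nonempty: "C n \<noteq> {}" for n
  proof -
    have "m < m + ennreal (1 / Suc n)"
      using finite by (simp add: ennreal_add_left_cancel_less[of m 0, simplified])
    then show ?thesis
      unfolding m_def C_def by (auto simp: INF_less_iff less_imp_le)
  qed
  have C_mid: "mid u w \<in> C n" if "u \<in> C n" "w \<in> C n" for u w n
  proof -
    have "2 * J (mid u w) \<le> 2 * (m + ennreal (1 / Suc n))"
      using mid_convex[of u w] that unfolding C_def mult_2 by (auto intro: order_trans add_mono)
    then show ?thesis
      using mid_closed that unfolding C_def by (subst (asm) ennreal_mult_le_mult_iff) auto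
  qed
  have C0_parallelogram: "Dist u w + 4 * Nm (mid u w) = 2 * Nm u + 2 * Nm w"
    if "u \<in> C 0" "w \<in> C 0" for u w
    using parallelogram that by (simp add: C_def)
  have C0_bounded: "Nm u \<le> ennreal K" if "u \<in> C 0" for u
    using bounded that by (simp add: C_def)
  obtain z where z: "\<And>j. z j \<in> C j" "\<And>j. Dist (z j) (z (Suc j)) \<le> ennreal ((1/4)^j)"
    using nested_midpoint_convex_fast_Cauchy[of C, OF C_antimono C_nonempty C_mid C0_parallelogram
        C0_bounded] by blast
  show thesis
  proof (rule that)
    show "z j \<in> A" and "J (z j) \<le> m + ennreal (1 / Suc j)" for j
      using z(1)[of j] by (simp_all add: C_def)
    show "Nm (z j) \<le> ennreal K" for j
      using C0_bounded C_antimono[of 0 j] z(1)[of j] by blast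
  qed (rule z(2))
qed

section \<open>Square-integrable processes on \<open>[0,T] \<times> \<Omega>\<close>\<close>

locale finite_horizon = prob_space M for M :: "'a measure" +
  fixes T :: real
  assumes T_pos: "0 < T"
begin

abbreviation dt :: "real measure" where
  "dt \<equiv> restrict_space lborel {0..T}"

lemma space_dt [simp]: "space dt = {0..T}"
  by (simp add: space_restrict_space)

lemma emeasure_dt_space: "emeasure dt (space dt) = ennreal T"
  using T_pos by (simp add: emeasure_restrict_space)

sublocale dt: finite_measure dt
  by (rule finite_measureI) (insert emeasure_dt_space, simp)

sublocale dt_M: pair_sigma_finite dt M
  by unfold_locales

lemma tP_eq: "tP M T = dt \<Otimes>\<^sub>M M"
  by (simp add: tP_def)

lemma nn_integral_dt: "(\<integral>\<^sup>+t\<in>{0..T}. f t \<partial>lborel) = (\<integral>\<^sup>+t. f t \<partial>dt)"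
  by (simp add: nn_integral_restrict_space)

lemma state_T_eq: "state x u T \<omega> = x + (\<integral>t. u t \<omega> \<partial>dt)"
  unfolding state_def set_lebesgue_integral_def
  using integral_restrict_space[of "{0..T}" lborel "\<lambda>t. u t \<omega>"] by simp

lemma measurable_section_dt:
  assumes "(\<lambda>(t,\<omega>). u t \<omega>) \<in> borel_measurable (tP M T)" "\<omega> \<in> space M"
  shows "(\<lambda>t. u t \<omega>) \<in> borel_measurable dt"
  using measurable_Pair1[OF assms(1)[unfolded tP_eq] assms(2)] by simp

lemma borel_measurable_nn_integral_dt:
  fixes f :: "real \<Rightarrow> 'a \<Rightarrow> ennreal"
  assumes "(\<lambda>(t,\<omega>). f t \<omega>) \<in> borel_measurable (tP M T)"
  shows "(\<lambda>\<omega>. \<integral>\<^sup>+t. f t \<omega> \<partial>dt) \<in> borel_measurable M"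
proof -
  have "(\<lambda>(\<omega>,t). f t \<omega>) \<in> borel_measurable (M \<Otimes>\<^sub>M dt)"
    using assms unfolding tP_eq by (subst measurable_pair_swap_iff) simp
  then show ?thesis
    using dt.borel_measurable_nn_integral[of "\<lambda>\<omega> t. f t \<omega>" M] by simp
qed

lemma borel_measurable_integral_dt:
  fixes f :: "real \<Rightarrow> 'a \<Rightarrow> real"
  assumes "(\<lambda>(t,\<omega>). f t \<omega>) \<in> borel_measurable (tP M T)"
  shows "(\<lambda>\<omega>. \<integral>t. f t \<omega> \<partial>dt) \<in> borel_measurable M"
proof -
  have "(\<lambda>(\<omega>,t). f t \<omega>) \<in> borel_measurable (M \<Otimes>\<^sub>M dt)"
    using assms unfolding tP_eq by (subst measurable_pair_swap_iff) simp
  then show ?thesis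
    using dt.borel_measurable_lebesgue_integral[of "\<lambda>\<omega> t. f t \<omega>" M] by simp
qed

lemma nn_integral_tP:
  fixes f :: "real \<Rightarrow> 'a \<Rightarrow> ennreal"
  assumes "(\<lambda>(t,\<omega>). f t \<omega>) \<in> borel_measurable (tP M T)"
  shows "(\<integral>\<^sup>+p. f (fst p) (snd p) \<partial>tP M T) = (\<integral>\<^sup>+\<omega>. (\<integral>\<^sup>+t. f t \<omega> \<partial>dt) \<partial>M)"
  using dt_M.nn_integral_snd[of "\<lambda>(t,\<omega>). f t \<omega>"] assms unfolding tP_eq case_prod_beta'
  by simp

lemma square_integrable_dt:
  fixes f :: "real \<Rightarrow> real"
  assumes f[measurable]: "f \<in> borel_measurable dt"
    and finite: "(\<integral>\<^sup>+t. ennreal ((f t)\<^sup>2) \<partial>dt) < \<infinity>"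
  shows "integrable dt f"
    and "ennreal ((\<integral>t. f t \<partial>dt)\<^sup>2) \<le> ennreal T * (\<integral>\<^sup>+t. ennreal ((f t)\<^sup>2) \<partial>dt)"
proof -
  have "integrable dt (\<lambda>t. (f t)\<^sup>2)"
    using finite by (simp add: integrable_iff_bounded)
  then show integrable: "integrable dt f"
    by (rule dt.square_integrable_imp_integrable[OF f])
  have "ennreal (\<bar>\<integral>t. f t \<partial>dt\<bar>) ^ 2 \<le> (\<integral>\<^sup>+t. ennreal \<bar>f t\<bar> * 1 \<partial>dt) ^ 2"
    using integral_norm_bound_ennreal[OF integrable] by (intro power_mono) auto
  also have "\<dots> \<le> (\<integral>\<^sup>+t. ennreal \<bar>f t\<bar> ^ 2 \<partial>dt) * (\<integral>\<^sup>+t. 1 ^ 2 \<partial>dt)"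
    by (rule Cauchy_Schwarz_nn_integral) auto
  finally show "ennreal ((\<integral>t. f t \<partial>dt)\<^sup>2) \<le> ennreal T * (\<integral>\<^sup>+t. ennreal ((f t)\<^sup>2) \<partial>dt)"
    using emeasure_dt_space by (simp add: ennreal_power mult.commute)
qed

definition energy :: "(real \<Rightarrow> 'a \<Rightarrow> real) \<Rightarrow> ennreal" where
  "energy u = (\<integral>\<^sup>+p. ennreal ((u (fst p) (snd p))\<^sup>2) \<partial>tP M T)"

lemma HF_measurable:
  assumes "u \<in> HF M B T"
  shows "(\<lambda>(t,\<omega>). u t \<omega>) \<in> borel_measurable (tP M T)"
    and "(\<lambda>p. u (fst p) (snd p)) \<in> borel_measurable (tP M T)"
  using assms by (simp_all add: HF_def case_prod_beta')

lemma HF_energy_finite: "u \<in> HF M B T \<Longrightarrow> energy u < \<infinity>"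
  by (simp add: HF_def energy_def)

lemma HF_AE_path_square_integrable:
  assumes u: "u \<in> HF M B T"
  shows "AE \<omega> in M. (\<lambda>t. u t \<omega>) \<in> borel_measurable dt \<and>
    (\<integral>\<^sup>+t. ennreal ((u t \<omega>)\<^sup>2) \<partial>dt) < \<infinity>"
proof -
  note [measurable] = HF_measurable(2)[OF u]
  have sq[measurable]: "(\<lambda>(t,\<omega>). ennreal ((u t \<omega>)\<^sup>2)) \<in> borel_measurable (tP M T)"
    unfolding case_prod_beta' by measurable
  have "(\<integral>\<^sup>+\<omega>. (\<integral>\<^sup>+t. ennreal ((u t \<omega>)\<^sup>2) \<partial>dt) \<partial>M) \<noteq> \<infinity>"
    using nn_integral_tP[OF sq] HF_energy_finite[OF u] by (simp add: energy_def)
  then have "AE \<omega> in M. (\<integral>\<^sup>+t. ennreal ((u t \<omega>)\<^sup>2) \<partial>dt) \<noteq> \<infinity>"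
    using borel_measurable_nn_integral_dt[OF sq] by (intro nn_integral_noteq_infinite) auto
  then show ?thesis
    using measurable_section_dt[OF HF_measurable(1)[OF u]] by (auto simp: less_top)
qed

lemma HF_AE_path_integrable:
  "u \<in> HF M B T \<Longrightarrow> AE \<omega> in M. integrable dt (\<lambda>t. u t \<omega>)"
  by (drule HF_AE_path_square_integrable) (auto elim!: AE_mp simp: square_integrable_dt(1))

lemma HF_lincomb:
  assumes u: "u \<in> HF M B T" and w: "w \<in> HF M B T"
  shows "(\<lambda>t \<omega>. a * u t \<omega> + b * w t \<omega>) \<in> HF M B T"
proof -
  note [measurable] = HF_measurable(2)[OF u] HF_measurable(2)[OF w]
  have "(a * x + b * y)\<^sup>2 \<le> 2 * a\<^sup>2 * x\<^sup>2 + 2 * b\<^sup>2 * y\<^sup>2" for x y :: real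
    using sum_squares_ge_zero[of "a * x - b * y" 0] by (simp add: power2_eq_square algebra_simps)
  then have "energy (\<lambda>t \<omega>. a * u t \<omega> + b * w t \<omega>)
      \<le> (\<integral>\<^sup>+p. ennreal (2 * a\<^sup>2) * ennreal ((u (fst p) (snd p))\<^sup>2)
            + ennreal (2 * b\<^sup>2) * ennreal ((w (fst p) (snd p))\<^sup>2) \<partial>tP M T)"
    unfolding energy_def
    by (intro nn_integral_mono) (simp flip: ennreal_mult ennreal_plus)
  also have "\<dots> = ennreal (2 * a\<^sup>2) * energy u + ennreal (2 * b\<^sup>2) * energy w"
    unfolding energy_def by (simp add: nn_integral_add nn_integral_cmult)
  also have "\<dots> < \<infinity>"
    using HF_energy_finite[OF u] HF_energy_finite[OF w] by (simp add: ennreal_mult_less_top)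
  finally have "energy (\<lambda>t \<omega>. a * u t \<omega> + b * w t \<omega>) < \<infinity>" .
  moreover have "(\<lambda>\<omega>. a * u t \<omega> + b * w t \<omega>) \<in> borel_measurable (std_filt M B t)"
    if "t \<in> {0..T}" for t
  proof -
    have [measurable]: "u t \<in> borel_measurable (std_filt M B t)"
      "w t \<in> borel_measurable (std_filt M B t)"
      using u w that by (auto simp: HF_def)
    show ?thesis
      by measurable
  qed
  moreover have "(\<lambda>(t,\<omega>). a * u t \<omega> + b * w t \<omega>) \<in> borel_measurable (tP M T)"
    unfolding case_prod_beta' by measurable
  ultimately show ?thesis
    unfolding HF_def energy_def by auto
qed

lemma energy_parallelogram:
  assumes [measurable]: "(\<lambda>p. u (fst p) (snd p)) \<in> borel_measurable (tP M T)"
    "(\<lambda>p. w (fst p) (snd p)) \<in> borel_measurable (tP M T)"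
  shows "energy (\<lambda>t \<omega>. u t \<omega> - w t \<omega>) + 4 * energy (\<lambda>t \<omega>. (u t \<omega> + w t \<omega>) / 2)
    = 2 * energy u + 2 * energy w"
proof -
  have pointwise: "ennreal ((a - b)\<^sup>2) + 4 * ennreal (((a + b) / 2)\<^sup>2)
      = 2 * ennreal (a\<^sup>2) + 2 * ennreal (b\<^sup>2)" for a b :: real
  proof -
    have "(a - b)\<^sup>2 + 4 * ((a + b) / 2)\<^sup>2 = 2 * a\<^sup>2 + 2 * b\<^sup>2"
      by (simp add: power2_eq_square field_simps)
    then show ?thesis
      by (simp add: numeral_mult_ennreal flip: ennreal_plus)
  qed
  have "energy (\<lambda>t \<omega>. u t \<omega> - w t \<omega>) + 4 * energy (\<lambda>t \<omega>. (u t \<omega> + w t \<omega>) / 2)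
      = (\<integral>\<^sup>+p. ennreal ((u (fst p) (snd p) - w (fst p) (snd p))\<^sup>2)
            + 4 * ennreal (((u (fst p) (snd p) + w (fst p) (snd p)) / 2)\<^sup>2) \<partial>tP M T)"
    unfolding energy_def by (simp add: nn_integral_add nn_integral_cmult)
  also have "\<dots> = (\<integral>\<^sup>+p. 2 * ennreal ((u (fst p) (snd p))\<^sup>2) + 2 * ennreal ((w (fst p) (snd p))\<^sup>2)
      \<partial>tP M T)"
    by (simp only: pointwise)
  also have "\<dots> = 2 * energy u + 2 * energy w"
    unfolding energy_def by (simp add: nn_integral_add nn_integral_cmult)
  finally show ?thesis .
qed

lemma fast_Cauchy_limit:
  fixes z :: "nat \<Rightarrow> real \<Rightarrow> 'a \<Rightarrow> real"
  defines "w \<equiv> \<lambda>t \<omega>. lim (\<lambda>j. z j t \<omega>)"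
  assumes z: "\<And>j. z j \<in> HF M B T"
    and increments: "\<And>j. energy (\<lambda>t \<omega>. z j t \<omega> - z (Suc j) t \<omega>) \<le> ennreal ((1/4)^j)"
  shows "AE p in tP M T. (\<lambda>j. z j (fst p) (snd p)) \<longlonglongrightarrow> w (fst p) (snd p)"
    and "AE \<omega> in M. AE t in dt. (\<lambda>j. z j t \<omega>) \<longlonglongrightarrow> w t \<omega>"
    and "AE \<omega> in M. (\<lambda>j. \<integral>t. z j t \<omega> \<partial>dt) \<longlonglongrightarrow> (\<integral>t. w t \<omega> \<partial>dt)"
proof -
  note [measurable] = HF_measurable(2)[OF z]
  define H where "H t \<omega> = (\<Sum>j. ennreal (2^j * (z (Suc j) t \<omega> - z j t \<omega>)\<^sup>2))" for t \<omega>
  have H_measurable: "(\<lambda>(t,\<omega>). H t \<omega>) \<in> borel_measurable (tP M T)"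
    unfolding H_def case_prod_beta' by measurable
  have "(\<integral>\<^sup>+p. H (fst p) (snd p) \<partial>tP M T) \<le> 2"
    unfolding H_def using increments
    by (intro nn_integral_weighted_sq_increments_le) (auto simp: energy_def power2_commute)
  then have H_finite: "(\<integral>\<^sup>+p. H (fst p) (snd p) \<partial>tP M T) \<noteq> \<infinity>"
    by (auto simp: top_unique)
  then show "AE p in tP M T. (\<lambda>j. z j (fst p) (snd p)) \<longlonglongrightarrow> w (fst p) (snd p)"
    unfolding H_def w_def by (rule AE_convergent_if_weighted_sq_increments[rotated]) measurable
  have "AE \<omega> in M. (\<integral>\<^sup>+t. H t \<omega> \<partial>dt) \<noteq> \<infinity>"
    using H_finite unfolding nn_integral_tP[OF H_measurable]
    by (intro nn_integral_noteq_infinite borel_measurable_nn_integral_dt H_measurable)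
  then have AE_path: "AE \<omega> in M. (\<integral>\<^sup>+t. H t \<omega> \<partial>dt) \<noteq> \<infinity> \<and> integrable dt (\<lambda>t. z 0 t \<omega>)
      \<and> (\<forall>j. (\<lambda>t. z j t \<omega>) \<in> borel_measurable dt)"
    using HF_AE_path_integrable[OF z[of 0]] AE_space
    by eventually_elim (use measurable_section_dt[OF HF_measurable(1)[OF z]] in auto)
  then show "AE \<omega> in M. AE t in dt. (\<lambda>j. z j t \<omega>) \<longlonglongrightarrow> w t \<omega>"
  proof eventually_elim
    case (elim \<omega>)
    show ?case
      unfolding w_def
      by (rule AE_convergent_if_weighted_sq_increments) (use elim in \<open>simp_all add: H_def\<close>)
  qed
  from AE_path show "AE \<omega> in M. (\<lambda>j. \<integral>t. z j t \<omega> \<partial>dt) \<longlonglongrightarrow> (\<integral>t. w t \<omega> \<partial>dt)"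
  proof eventually_elim
    case (elim \<omega>)
    show ?case
      unfolding w_def
      by (rule integral_tendsto_if_weighted_sq_increments)
        (use elim dt.finite_measure_axioms in \<open>simp_all add: H_def\<close>)
  qed
qed

lemma HF_limit:
  fixes z :: "nat \<Rightarrow> real \<Rightarrow> 'a \<Rightarrow> real"
  assumes z: "\<And>j. z j \<in> HF M B T"
    and converges: "AE p in tP M T. (\<lambda>j. z j (fst p) (snd p)) \<longlonglongrightarrow> lim (\<lambda>j. z j (fst p) (snd p))"
    and bounded: "\<And>j. energy (z j) \<le> ennreal K"
  shows "(\<lambda>t \<omega>. lim (\<lambda>j. z j t \<omega>)) \<in> HF M B T"
proof -
  note [measurable] = HF_measurable(2)[OF z]
  have "energy (\<lambda>t \<omega>. lim (\<lambda>j. z j t \<omega>))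
      = (\<integral>\<^sup>+p. liminf (\<lambda>j. ennreal ((z j (fst p) (snd p))\<^sup>2)) \<partial>tP M T)"
    unfolding energy_def using converges
    by (intro nn_integral_cong_AE) (auto elim!: AE_mp intro!: lim_imp_Liminf[symmetric]
        tendsto_ennrealI tendsto_power)
  also have "\<dots> \<le> liminf (\<lambda>j. energy (z j))"
    unfolding energy_def by (rule nn_integral_liminf) measurable
  also have "\<dots> \<le> liminf (\<lambda>j. ennreal K)"
    by (intro Liminf_mono) (simp add: bounded)
  finally have "energy (\<lambda>t \<omega>. lim (\<lambda>j. z j t \<omega>)) < \<infinity>"
    by (simp add: Liminf_const order_le_less_trans)
  moreover have "(\<lambda>\<omega>. lim (\<lambda>j. z j t \<omega>)) \<in> borel_measurable (std_filt M B t)" if "t \<in> {0..T}" for t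
  proof -
    have [measurable]: "z j t \<in> borel_measurable (std_filt M B t)" for j
      using z[of j] that by (auto simp: HF_def)
    show ?thesis
      by measurable
  qed
  moreover have "(\<lambda>(t,\<omega>). lim (\<lambda>j. z j t \<omega>)) \<in> borel_measurable (tP M T)"
    unfolding case_prod_beta' by measurable
  ultimately show ?thesis
    unfolding HF_def energy_def by auto
qed

definition total_energy :: "nat \<Rightarrow> (nat \<Rightarrow> real \<Rightarrow> 'a \<Rightarrow> real) \<Rightarrow> ennreal" where
  "total_energy N v = (\<Sum>i<N. energy (v i))"

definition control_midpoint ::
    "(nat \<Rightarrow> real \<Rightarrow> 'a \<Rightarrow> real) \<Rightarrow> (nat \<Rightarrow> real \<Rightarrow> 'a \<Rightarrow> real) \<Rightarrow> nat \<Rightarrow> real \<Rightarrow> 'a \<Rightarrow> real" where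
  "control_midpoint u w = (\<lambda>i t \<omega>. (u i t \<omega> + w i t \<omega>) / 2)"

lemma admissible_HF: "admissible M B T N Q v \<Longrightarrow> i < N \<Longrightarrow> v i \<in> HF M B T"
  by (simp add: admissible_def)

lemma admissible_const: "0 < N \<Longrightarrow> Q \<in> HF M B T \<Longrightarrow> admissible M B T N Q (\<lambda>i. Q)"
  by (simp add: admissible_def)

lemma admissible_midpoint:
  assumes u: "admissible M B T N Q u" and w: "admissible M B T N Q w"
  shows "admissible M B T N Q (control_midpoint u w)"
proof -
  have "control_midpoint u w i \<in> HF M B T" if "i < N" for i
  proof -
    have "control_midpoint u w i = (\<lambda>t \<omega>. 1/2 * u i t \<omega> + 1/2 * w i t \<omega>)"
      unfolding control_midpoint_def by (simp add: add_divide_distrib)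
    then show ?thesis
      using HF_lincomb[OF admissible_HF[OF u that] admissible_HF[OF w that]] by (simp only:)
  qed
  moreover have "AE p in tP M T. 1 / real N * (\<Sum>i<N. u i (fst p) (snd p)) = Q (fst p) (snd p)"
    and "AE p in tP M T. 1 / real N * (\<Sum>i<N. w i (fst p) (snd p)) = Q (fst p) (snd p)"
    using u w by (simp_all add: admissible_def)
  then have "AE p in tP M T.
      1 / real N * (\<Sum>i<N. control_midpoint u w i (fst p) (snd p)) = Q (fst p) (snd p)"
  proof eventually_elim
    case (elim p)
    have mid_eq: "1 / real N * (\<Sum>i<N. control_midpoint u w i (fst p) (snd p))
        = (1 / real N * (\<Sum>i<N. u i (fst p) (snd p)) + 1 / real N * (\<Sum>i<N. w i (fst p) (snd p))) / 2"
      unfolding control_midpoint_def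
      by (simp add: sum.distrib sum_divide_distrib[symmetric] algebra_simps)
    show ?case
      unfolding mid_eq elim by simp
  qed
  ultimately show ?thesis
    unfolding admissible_def by auto
qed

lemma total_energy_parallelogram:
  assumes u: "admissible M B T N Q u" and w: "admissible M B T N Q w"
  shows "total_energy N (\<lambda>i t \<omega>. u i t \<omega> - w i t \<omega>) + 4 * total_energy N (control_midpoint u w)
    = 2 * total_energy N u + 2 * total_energy N w"
  unfolding total_energy_def control_midpoint_def sum_distrib_left sum.distrib[symmetric]
  using energy_parallelogram[OF HF_measurable(2)[OF admissible_HF[OF u]]
      HF_measurable(2)[OF admissible_HF[OF w]]]
  by (intro sum.cong) auto

lemma energy_le_total_energy: "i < N \<Longrightarrow> energy (v i) \<le> total_energy N v"
  unfolding total_energy_def by (rule member_le_sum) auto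

lemma admissible_limit:
  fixes z :: "nat \<Rightarrow> nat \<Rightarrow> real \<Rightarrow> 'a \<Rightarrow> real"
  assumes z: "\<And>j. admissible M B T N Q (z j)"
    and increments: "\<And>j. total_energy N (\<lambda>i t \<omega>. z j i t \<omega> - z (Suc j) i t \<omega>) \<le> ennreal ((1/4)^j)"
    and bounded: "\<And>j. total_energy N (z j) \<le> ennreal K"
  shows "admissible M B T N Q (\<lambda>i t \<omega>. lim (\<lambda>j. z j i t \<omega>))"
proof -
  have converges: "AE p in tP M T. (\<lambda>j. z j i (fst p) (snd p)) \<longlonglongrightarrow> lim (\<lambda>j. z j i (fst p) (snd p))"
    if "i < N" for i
    using fast_Cauchy_limit(1)[OF admissible_HF[OF z that]]
      order_trans[OF energy_le_total_energy[OF that] increments] by simp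
  have "(\<lambda>t \<omega>. lim (\<lambda>j. z j i t \<omega>)) \<in> HF M B T" if "i < N" for i
    using order_trans[OF energy_le_total_energy[OF that] bounded]
    by (rule HF_limit[OF admissible_HF[OF z that] converges[OF that]])
  moreover have "AE p in tP M T.
      1 / real N * (\<Sum>i<N. lim (\<lambda>j. z j i (fst p) (snd p))) = Q (fst p) (snd p)"
  proof -
    have "AE p in tP M T. \<forall>i\<in>{..<N}. (\<lambda>j. z j i (fst p) (snd p)) \<longlonglongrightarrow> lim (\<lambda>j. z j i (fst p) (snd p))"
      using converges by (subst AE_finite_all) auto
    moreover have "AE p in tP M T.
        \<forall>j. 1 / real N * (\<Sum>i<N. z j i (fst p) (snd p)) = Q (fst p) (snd p)"
      using z by (simp add: AE_all_countable admissible_def)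
    ultimately show ?thesis
    proof eventually_elim
      case (elim p)
      then have "(\<lambda>j. 1 / real N * (\<Sum>i<N. z j i (fst p) (snd p)))
          \<longlonglongrightarrow> 1 / real N * (\<Sum>i<N. lim (\<lambda>j. z j i (fst p) (snd p)))"
        by (intro tendsto_mult_left tendsto_sum) auto
      with elim show ?case
        by (simp add: LIMSEQ_const_iff)
    qed
  qed
  ultimately show ?thesis
    unfolding admissible_def by auto
qed

end

section \<open>The control problem\<close>

locale control_problem = finite_horizon +
  fixes l \<Psi> :: "real \<Rightarrow> real"
  assumes l_cont: "continuous_on UNIV l" and Psi_cont: "continuous_on UNIV \<Psi>"
    and l_nonneg: "\<And>v. 0 \<le> l v" and Psi_nonneg: "\<And>x. 0 \<le> \<Psi> x"
begin

lemmas [measurable] =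
  borel_measurable_continuous_onI[OF l_cont] borel_measurable_continuous_onI[OF Psi_cont]

lemma isCont_l: "isCont l v" and isCont_Psi: "isCont \<Psi> x"
  using l_cont Psi_cont by (simp_all add: continuous_on_eq_continuous_at)

definition path_cost :: "real \<Rightarrow> (real \<Rightarrow> 'a \<Rightarrow> real) \<Rightarrow> 'a \<Rightarrow> ennreal" where
  "path_cost x u \<omega> = (\<integral>\<^sup>+t. ennreal (l (u t \<omega>)) \<partial>dt) + ennreal (\<Psi> (x + (\<integral>t. u t \<omega> \<partial>dt)))"

definition player_cost :: "real \<Rightarrow> (real \<Rightarrow> 'a \<Rightarrow> real) \<Rightarrow> ennreal" where
  "player_cost x u = (\<integral>\<^sup>+\<omega>. path_cost x u \<omega> \<partial>M)"

definition mean_cost :: "nat \<Rightarrow> (nat \<Rightarrow> real) \<Rightarrow> (nat \<Rightarrow> real \<Rightarrow> 'a \<Rightarrow> real) \<Rightarrow> ennreal" where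
  "mean_cost N x0 v = ennreal (1 / real N) * (\<Sum>i<N. player_cost (x0 i) (v i))"

lemma cost_eq_mean_cost:
  assumes "\<And>x v. L x v = l v"
  shows "cost M T N L \<Psi> x0 = mean_cost N x0"
  unfolding cost_def mean_cost_def player_cost_def path_cost_def assms nn_integral_dt state_T_eq ..

lemma borel_measurable_path_cost:
  assumes [measurable]: "(\<lambda>p. u (fst p) (snd p)) \<in> borel_measurable (tP M T)"
  shows "path_cost x u \<in> borel_measurable M"
proof -
  have "(\<lambda>(t,\<omega>). ennreal (l (u t \<omega>))) \<in> borel_measurable (tP M T)"
    and "(\<lambda>(t,\<omega>). u t \<omega>) \<in> borel_measurable (tP M T)"
    unfolding case_prod_beta' by measurable
  note [measurable] =
    borel_measurable_nn_integral_dt[OF this(1)] borel_measurable_integral_dt[OF this(2)]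
  show ?thesis
    unfolding path_cost_def by measurable
qed

lemma energy_le_player_cost:
  assumes u: "u \<in> HF M B T" and coercive: "\<And>v. \<alpha> * v\<^sup>2 - \<beta> \<le> l v"
    and "0 \<le> \<alpha>" "0 \<le> \<beta>"
  shows "ennreal \<alpha> * energy u \<le> player_cost x u + ennreal (\<beta> * T)"
proof -
  note [measurable] = HF_measurable(2)[OF u]
  have sq: "(\<lambda>(t,\<omega>). ennreal ((u t \<omega>)\<^sup>2)) \<in> borel_measurable (tP M T)"
    unfolding case_prod_beta' by measurable
  have "ennreal \<alpha> * (\<integral>\<^sup>+t. ennreal ((u t \<omega>)\<^sup>2) \<partial>dt) \<le> path_cost x u \<omega> + ennreal (\<beta> * T)"
    if "\<omega> \<in> space M" for \<omega>
  proof -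
    have [measurable]: "(\<lambda>t. u t \<omega>) \<in> borel_measurable dt"
      using measurable_section_dt[OF HF_measurable(1)[OF u] that] .
    have "ennreal \<alpha> * (\<integral>\<^sup>+t. ennreal ((u t \<omega>)\<^sup>2) \<partial>dt) = (\<integral>\<^sup>+t. ennreal (\<alpha> * (u t \<omega>)\<^sup>2) \<partial>dt)"
      using \<open>0 \<le> \<alpha>\<close> by (simp add: nn_integral_cmult ennreal_mult)
    also have "\<dots> \<le> (\<integral>\<^sup>+t. ennreal (l (u t \<omega>)) + ennreal \<beta> \<partial>dt)"
      using coercive l_nonneg \<open>0 \<le> \<beta>\<close>
      by (intro nn_integral_mono) (simp flip: ennreal_plus add: ennreal_leI add.commute diff_le_eq)
    also have "\<dots> = (\<integral>\<^sup>+t. ennreal (l (u t \<omega>)) \<partial>dt) + ennreal (\<beta> * T)"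
      using emeasure_dt_space \<open>0 \<le> \<beta>\<close> T_pos by (simp add: nn_integral_add ennreal_mult)
    also have "\<dots> \<le> path_cost x u \<omega> + ennreal (\<beta> * T)"
      unfolding path_cost_def by (intro add_mono) auto
    finally show ?thesis .
  qed
  then have "ennreal \<alpha> * energy u \<le> (\<integral>\<^sup>+\<omega>. path_cost x u \<omega> + ennreal (\<beta> * T) \<partial>M)"
    unfolding energy_def nn_integral_tP[OF sq]
    using borel_measurable_nn_integral_dt[OF sq]
    by (subst nn_integral_cmult[symmetric]) (auto intro: nn_integral_mono)
  also have "\<dots> = player_cost x u + ennreal (\<beta> * T)"
    unfolding player_cost_def
    using borel_measurable_path_cost[OF HF_measurable(2)[OF u]]
    by (simp add: nn_integral_add emeasure_space_1)
  finally show ?thesis .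
qed

lemma path_cost_le:
  assumes [measurable]: "(\<lambda>t. u t \<omega>) \<in> borel_measurable dt"
    and finite: "(\<integral>\<^sup>+t. ennreal ((u t \<omega>)\<^sup>2) \<partial>dt) < \<infinity>"
    and l_growth: "\<And>v. l v \<le> b * (1 + v\<^sup>2)" and Psi_growth: "\<And>x. \<Psi> x \<le> C * (1 + x\<^sup>2)"
    and "0 \<le> b" "0 \<le> C"
  shows "path_cost x u \<omega> \<le> ennreal (b * T + C * (1 + 2 * x\<^sup>2))
    + ennreal (b + 2 * C * T) * (\<integral>\<^sup>+t. ennreal ((u t \<omega>)\<^sup>2) \<partial>dt)"
proof -
  obtain s where s: "(\<integral>\<^sup>+t. ennreal ((u t \<omega>)\<^sup>2) \<partial>dt) = ennreal s" "0 \<le> s"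
    using finite by (cases "\<integral>\<^sup>+t. ennreal ((u t \<omega>)\<^sup>2) \<partial>dt") auto
  define I where "I = (\<integral>t. u t \<omega> \<partial>dt)"
  have "ennreal (I\<^sup>2) \<le> ennreal (T * s)"
    using square_integrable_dt(2)[of "\<lambda>t. u t \<omega>"] finite s T_pos by (simp add: I_def ennreal_mult)
  then have I_sq: "I\<^sup>2 \<le> T * s"
    using s(2) T_pos by (simp add: ennreal_le_iff)
  have "(\<integral>\<^sup>+t. ennreal (l (u t \<omega>)) \<partial>dt) \<le> (\<integral>\<^sup>+t. ennreal b + ennreal b * ennreal ((u t \<omega>)\<^sup>2) \<partial>dt)"
    using l_growth \<open>0 \<le> b\<close>
    by (intro nn_integral_mono)
      (simp add: ennreal_leI algebra_simps flip: ennreal_mult ennreal_plus)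
  also have "\<dots> = ennreal (b * T + b * s)"
    using emeasure_dt_space s \<open>0 \<le> b\<close> T_pos
    by (simp add: nn_integral_add nn_integral_cmult ennreal_mult)
  finally have running: "(\<integral>\<^sup>+t. ennreal (l (u t \<omega>)) \<partial>dt) \<le> ennreal (b * T + b * s)" .
  have "(x + I)\<^sup>2 \<le> 2 * x\<^sup>2 + 2 * I\<^sup>2"
    using sum_squares_ge_zero[of "x - I" 0] by (simp add: power2_eq_square algebra_simps)
  then have "C * (1 + (x + I)\<^sup>2) \<le> C * (1 + 2 * x\<^sup>2 + 2 * (T * s))"
    using I_sq \<open>0 \<le> C\<close> by (intro mult_left_mono) auto
  with Psi_growth[of "x + I"] have "\<Psi> (x + I) \<le> C * (1 + 2 * x\<^sup>2 + 2 * (T * s))"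
    by (rule order_trans)
  then have terminal: "ennreal (\<Psi> (x + I)) \<le> ennreal (C * (1 + 2 * x\<^sup>2 + 2 * (T * s)))"
    by (rule ennreal_leI)
  have "path_cost x u \<omega> \<le> ennreal (b * T + b * s) + ennreal (C * (1 + 2 * x\<^sup>2 + 2 * (T * s)))"
    unfolding path_cost_def I_def[symmetric] using running terminal by (rule add_mono)
  also have "\<dots> = ennreal (b * T + C * (1 + 2 * x\<^sup>2)) + ennreal (b + 2 * C * T) * ennreal s"
    using \<open>0 \<le> b\<close> \<open>0 \<le> C\<close> s(2) T_pos
    by (simp add: algebra_simps flip: ennreal_plus ennreal_mult)
  finally show ?thesis
    unfolding s .
qed

lemma player_cost_finite:
  assumes u: "u \<in> HF M B T"
    and l_growth: "\<And>v. l v \<le> b * (1 + v\<^sup>2)" and Psi_growth: "\<And>x. \<Psi> x \<le> C * (1 + x\<^sup>2)"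
    and "0 \<le> b" "0 \<le> C"
  shows "player_cost x u < \<infinity>"
proof -
  note [measurable] = HF_measurable(2)[OF u]
  have sq: "(\<lambda>(t,\<omega>). ennreal ((u t \<omega>)\<^sup>2)) \<in> borel_measurable (tP M T)"
    unfolding case_prod_beta' by measurable
  note [measurable] = borel_measurable_nn_integral_dt[OF sq]
  define K0 where "K0 = ennreal (b * T + C * (1 + 2 * x\<^sup>2))"
  define K1 where "K1 = ennreal (b + 2 * C * T)"
  have "player_cost x u \<le> (\<integral>\<^sup>+\<omega>. K0 + K1 * (\<integral>\<^sup>+t. ennreal ((u t \<omega>)\<^sup>2) \<partial>dt) \<partial>M)"
    unfolding player_cost_def K0_def K1_def
    using HF_AE_path_square_integrable[OF u]
    by (intro nn_integral_mono_AE) (auto elim!: AE_mp intro!: path_cost_le assms)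
  also have "\<dots> = K0 + K1 * energy u"
    unfolding energy_def nn_integral_tP[OF sq]
    by (simp add: nn_integral_add nn_integral_cmult emeasure_space_1)
  also have "\<dots> < \<infinity>"
    using HF_energy_finite[OF u] unfolding K0_def K1_def by (simp add: ennreal_mult_less_top)
  finally show ?thesis .
qed

lemma path_cost_midpoint:
  assumes u: "integrable dt (\<lambda>t. u t \<omega>)" and w: "integrable dt (\<lambda>t. w t \<omega>)"
    and l_convex: "convex_on UNIV (\<lambda>v. l v - \<theta> / 2 * v\<^sup>2)" and "0 \<le> \<theta>"
    and Psi_convex: "convex_on UNIV \<Psi>"
  shows "2 * path_cost x (\<lambda>t \<omega>. (u t \<omega> + w t \<omega>) / 2) \<omega>
      + ennreal (\<theta> / 4) * (\<integral>\<^sup>+t. ennreal ((u t \<omega> - w t \<omega>)\<^sup>2) \<partial>dt)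
    \<le> path_cost x u \<omega> + path_cost x w \<omega>"
proof -
  have [measurable]: "(\<lambda>t. u t \<omega>) \<in> borel_measurable dt" "(\<lambda>t. w t \<omega>) \<in> borel_measurable dt"
    using u w by auto
  have running: "2 * (\<integral>\<^sup>+t. ennreal (l ((u t \<omega> + w t \<omega>) / 2)) \<partial>dt)
      + ennreal (\<theta> / 4) * (\<integral>\<^sup>+t. ennreal ((u t \<omega> - w t \<omega>)\<^sup>2) \<partial>dt)
    \<le> (\<integral>\<^sup>+t. ennreal (l (u t \<omega>)) \<partial>dt) + (\<integral>\<^sup>+t. ennreal (l (w t \<omega>)) \<partial>dt)"
    using convex_on_minus_square_midpoint[OF l_convex] l_nonneg \<open>0 \<le> \<theta>\<close>
    by (intro nn_integral_midpoint_le) auto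
  have Psi_midpoint: "2 * \<Psi> ((a + b) / 2) \<le> \<Psi> a + \<Psi> b" for a b
    using convex_on_minus_square_midpoint[of \<Psi> 0] Psi_convex by simp
  have "x + (\<integral>t. (u t \<omega> + w t \<omega>) / 2 \<partial>dt)
      = ((x + (\<integral>t. u t \<omega> \<partial>dt)) + (x + (\<integral>t. w t \<omega> \<partial>dt))) / 2"
    using u w by (simp add: field_simps)
  then have "2 * \<Psi> (x + (\<integral>t. (u t \<omega> + w t \<omega>) / 2 \<partial>dt))
      \<le> \<Psi> (x + (\<integral>t. u t \<omega> \<partial>dt)) + \<Psi> (x + (\<integral>t. w t \<omega> \<partial>dt))"
    by (simp only: Psi_midpoint)
  then have terminal: "2 * ennreal (\<Psi> (x + (\<integral>t. (u t \<omega> + w t \<omega>) / 2 \<partial>dt)))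
    \<le> ennreal (\<Psi> (x + (\<integral>t. u t \<omega> \<partial>dt))) + ennreal (\<Psi> (x + (\<integral>t. w t \<omega> \<partial>dt)))"
    using Psi_nonneg by (simp add: numeral_mult_ennreal ennreal_leI flip: ennreal_plus)
  have "2 * path_cost x (\<lambda>t \<omega>. (u t \<omega> + w t \<omega>) / 2) \<omega>
      + ennreal (\<theta> / 4) * (\<integral>\<^sup>+t. ennreal ((u t \<omega> - w t \<omega>)\<^sup>2) \<partial>dt)
    = (2 * (\<integral>\<^sup>+t. ennreal (l ((u t \<omega> + w t \<omega>) / 2)) \<partial>dt)
        + ennreal (\<theta> / 4) * (\<integral>\<^sup>+t. ennreal ((u t \<omega> - w t \<omega>)\<^sup>2) \<partial>dt))
      + 2 * ennreal (\<Psi> (x + (\<integral>t. (u t \<omega> + w t \<omega>) / 2 \<partial>dt)))"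
    unfolding path_cost_def by (simp add: distrib_left ac_simps)
  also have "\<dots> \<le> path_cost x u \<omega> + path_cost x w \<omega>"
    using add_mono[OF running terminal] unfolding path_cost_def by (simp add: ac_simps)
  finally show ?thesis .
qed

lemma player_cost_midpoint:
  assumes u: "u \<in> HF M B T" and w: "w \<in> HF M B T"
    and l_convex: "convex_on UNIV (\<lambda>v. l v - \<theta> / 2 * v\<^sup>2)" and "0 \<le> \<theta>"
    and Psi_convex: "convex_on UNIV \<Psi>"
  shows "2 * player_cost x (\<lambda>t \<omega>. (u t \<omega> + w t \<omega>) / 2)
      + ennreal (\<theta> / 4) * energy (\<lambda>t \<omega>. u t \<omega> - w t \<omega>)
    \<le> player_cost x u + player_cost x w"
proof -
  note [measurable] = HF_measurable(2)[OF u] HF_measurable(2)[OF w]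
  have sq: "(\<lambda>(t,\<omega>). ennreal ((u t \<omega> - w t \<omega>)\<^sup>2)) \<in> borel_measurable (tP M T)"
    unfolding case_prod_beta' by measurable
  have mid: "(\<lambda>p. (u (fst p) (snd p) + w (fst p) (snd p)) / 2) \<in> borel_measurable (tP M T)"
    by measurable
  note [measurable] = borel_measurable_nn_integral_dt[OF sq] borel_measurable_path_cost[OF mid]
    borel_measurable_path_cost[OF HF_measurable(2)[OF u]]
    borel_measurable_path_cost[OF HF_measurable(2)[OF w]]
  have "2 * player_cost x (\<lambda>t \<omega>. (u t \<omega> + w t \<omega>) / 2)
        + ennreal (\<theta> / 4) * energy (\<lambda>t \<omega>. u t \<omega> - w t \<omega>)
      = (\<integral>\<^sup>+\<omega>. 2 * path_cost x (\<lambda>t \<omega>. (u t \<omega> + w t \<omega>) / 2) \<omega>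
          + ennreal (\<theta> / 4) * (\<integral>\<^sup>+t. ennreal ((u t \<omega> - w t \<omega>)\<^sup>2) \<partial>dt) \<partial>M)"
    unfolding player_cost_def energy_def nn_integral_tP[OF sq, simplified]
    by (simp add: nn_integral_add nn_integral_cmult)
  also have "\<dots> \<le> (\<integral>\<^sup>+\<omega>. path_cost x u \<omega> + path_cost x w \<omega> \<partial>M)"
    using HF_AE_path_integrable[OF u] HF_AE_path_integrable[OF w]
    by (intro nn_integral_mono_AE) (auto elim!: AE_mp intro!: path_cost_midpoint assms)
  also have "\<dots> = player_cost x u + player_cost x w"
    unfolding player_cost_def by (simp add: nn_integral_add)
  finally show ?thesis .
qed

lemma path_cost_lsc:
  assumes [measurable]: "\<And>j. (\<lambda>t. z j t \<omega>) \<in> borel_measurable dt"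
    and converges: "AE t in dt. (\<lambda>j. z j t \<omega>) \<longlonglongrightarrow> w t \<omega>"
    and integrals_converge: "(\<lambda>j. \<integral>t. z j t \<omega> \<partial>dt) \<longlonglongrightarrow> (\<integral>t. w t \<omega> \<partial>dt)"
  shows "path_cost x w \<omega> \<le> liminf (\<lambda>j. path_cost x (z j) \<omega>)"
proof -
  have "AE t in dt. ennreal (l (w t \<omega>)) \<le> liminf (\<lambda>j. ennreal (l (z j t \<omega>)))"
    using converges
  proof eventually_elim
    case (elim t)
    then have "(\<lambda>j. ennreal (l (z j t \<omega>))) \<longlonglongrightarrow> ennreal (l (w t \<omega>))"
      by (intro tendsto_ennrealI isCont_tendsto_compose[OF isCont_l])
    then show ?case
      by (simp add: lim_imp_Liminf)
  qed
  then have "(\<integral>\<^sup>+t. ennreal (l (w t \<omega>)) \<partial>dt) \<le> (\<integral>\<^sup>+t. liminf (\<lambda>j. ennreal (l (z j t \<omega>))) \<partial>dt)"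
    by (rule nn_integral_mono_AE)
  also have "\<dots> \<le> liminf (\<lambda>j. \<integral>\<^sup>+t. ennreal (l (z j t \<omega>)) \<partial>dt)"
    by (rule nn_integral_liminf) measurable
  finally have running:
    "(\<integral>\<^sup>+t. ennreal (l (w t \<omega>)) \<partial>dt) \<le> liminf (\<lambda>j. \<integral>\<^sup>+t. ennreal (l (z j t \<omega>)) \<partial>dt)" .
  have "(\<lambda>j. ennreal (\<Psi> (x + (\<integral>t. z j t \<omega> \<partial>dt)))) \<longlonglongrightarrow> ennreal (\<Psi> (x + (\<integral>t. w t \<omega> \<partial>dt)))"
    by (intro tendsto_ennrealI isCont_tendsto_compose[OF isCont_Psi] tendsto_add tendsto_const
        integrals_converge)
  then have terminal: "ennreal (\<Psi> (x + (\<integral>t. w t \<omega> \<partial>dt)))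
      = liminf (\<lambda>j. ennreal (\<Psi> (x + (\<integral>t. z j t \<omega> \<partial>dt))))"
    by (simp add: lim_imp_Liminf)
  show ?thesis
    unfolding path_cost_def terminal
    by (rule order_trans[OF add_right_mono[OF running] liminf_add_ennreal])
qed

lemma player_cost_lsc:
  assumes z: "\<And>j. z j \<in> HF M B T"
    and converges: "AE \<omega> in M. AE t in dt. (\<lambda>j. z j t \<omega>) \<longlonglongrightarrow> w t \<omega>"
    and integrals_converge: "AE \<omega> in M. (\<lambda>j. \<integral>t. z j t \<omega> \<partial>dt) \<longlonglongrightarrow> (\<integral>t. w t \<omega> \<partial>dt)"
  shows "player_cost x w \<le> liminf (\<lambda>j. player_cost x (z j))"
proof -
  have "AE \<omega> in M. path_cost x w \<omega> \<le> liminf (\<lambda>j. path_cost x (z j) \<omega>)"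
    using converges integrals_converge AE_space
  proof eventually_elim
    case (elim \<omega>)
    then show ?case
      using measurable_section_dt[OF HF_measurable(1)[OF z]] by (intro path_cost_lsc) auto
  qed
  then have "player_cost x w \<le> (\<integral>\<^sup>+\<omega>. liminf (\<lambda>j. path_cost x (z j) \<omega>) \<partial>M)"
    unfolding player_cost_def by (rule nn_integral_mono_AE)
  also have "\<dots> \<le> liminf (\<lambda>j. player_cost x (z j))"
    unfolding player_cost_def
    using borel_measurable_path_cost[OF HF_measurable(2)[OF z]] by (rule nn_integral_liminf)
  finally show ?thesis .
qed

lemma mean_cost_eq_sum:
  "0 < N \<Longrightarrow> ennreal (real N) * mean_cost N x0 v = (\<Sum>i<N. player_cost (x0 i) (v i))"
  unfolding mean_cost_def mult.assoc[symmetric] by (simp flip: ennreal_mult)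

lemma mean_cost_const_finite:
  assumes Q: "Q \<in> HF M B T"
    and "\<And>v. l v \<le> b * (1 + v\<^sup>2)" "\<And>x. \<Psi> x \<le> C * (1 + x\<^sup>2)" "0 \<le> b" "0 \<le> C"
  shows "mean_cost N x0 (\<lambda>i. Q) < \<infinity>"
  unfolding mean_cost_def using player_cost_finite[OF Q assms(2-)]
  by (simp add: ennreal_mult_less_top)

lemma mean_cost_midpoint:
  assumes u: "admissible M B T N Q u" and w: "admissible M B T N Q w"
    and l_convex: "convex_on UNIV (\<lambda>v. l v - \<theta> / 2 * v\<^sup>2)" and "0 \<le> \<theta>"
    and Psi_convex: "convex_on UNIV \<Psi>"
  shows "2 * mean_cost N x0 (control_midpoint u w)
      + ennreal (1 / real N) * (ennreal (\<theta> / 4) * total_energy N (\<lambda>i t \<omega>. u i t \<omega> - w i t \<omega>))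
    \<le> mean_cost N x0 u + mean_cost N x0 w"
proof -
  have "(\<Sum>i<N. 2 * player_cost (x0 i) (control_midpoint u w i)
        + ennreal (\<theta> / 4) * energy (\<lambda>t \<omega>. u i t \<omega> - w i t \<omega>))
      \<le> (\<Sum>i<N. player_cost (x0 i) (u i) + player_cost (x0 i) (w i))"
    unfolding control_midpoint_def
    using player_cost_midpoint[OF admissible_HF[OF u] admissible_HF[OF w] l_convex \<open>0 \<le> \<theta>\<close>
        Psi_convex]
    by (intro sum_mono) auto
  then have "ennreal (1 / real N) * (\<Sum>i<N. 2 * player_cost (x0 i) (control_midpoint u w i)
        + ennreal (\<theta> / 4) * energy (\<lambda>t \<omega>. u i t \<omega> - w i t \<omega>))
      \<le> ennreal (1 / real N) * (\<Sum>i<N. player_cost (x0 i) (u i) + player_cost (x0 i) (w i))"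
    by (rule mult_left_mono) simp
  then show ?thesis
    unfolding mean_cost_def total_energy_def sum.distrib distrib_left sum_distrib_left[symmetric]
    by (simp add: ac_simps)
qed

lemma total_energy_le_mean_cost:
  assumes v: "admissible M B T N Q v" and "0 < N"
    and coercive: "\<And>v. \<alpha> * v\<^sup>2 - \<beta> \<le> l v" and "0 < \<alpha>" "0 \<le> \<beta>"
    and cost: "mean_cost N x0 v \<le> ennreal c" and "0 \<le> c"
  shows "total_energy N v \<le> ennreal (real N * (c + \<beta> * T) / \<alpha>)"
proof -
  have "ennreal \<alpha> * total_energy N v \<le> (\<Sum>i<N. player_cost (x0 i) (v i) + ennreal (\<beta> * T))"
    unfolding total_energy_def sum_distrib_left
    using energy_le_player_cost[OF admissible_HF[OF v] coercive] assms(4,5) by (intro sum_mono) auto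
  also have "\<dots> = ennreal (real N) * mean_cost N x0 v + ennreal (real N) * ennreal (\<beta> * T)"
    unfolding sum.distrib mean_cost_eq_sum[OF \<open>0 < N\<close>] by (simp add: ennreal_of_nat_eq_real_of_nat)
  also have "\<dots> \<le> ennreal (real N) * ennreal c + ennreal (real N) * ennreal (\<beta> * T)"
    using cost by (intro add_right_mono mult_left_mono) auto
  also have "\<dots> = ennreal \<alpha> * ennreal (real N * (c + \<beta> * T) / \<alpha>)"
    using \<open>0 < \<alpha>\<close> \<open>0 \<le> \<beta>\<close> \<open>0 \<le> c\<close> T_pos by (simp flip: ennreal_mult ennreal_plus add: field_simps)
  finally show ?thesis
    using \<open>0 < \<alpha>\<close> by (subst (asm) ennreal_mult_le_mult_iff) auto
qed

lemma mean_cost_limit_le_liminf: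
  fixes z :: "nat \<Rightarrow> nat \<Rightarrow> real \<Rightarrow> 'a \<Rightarrow> real"
  assumes z: "\<And>j. admissible M B T N Q (z j)"
    and increments: "\<And>j. total_energy N (\<lambda>i t \<omega>. z j i t \<omega> - z (Suc j) i t \<omega>) \<le> ennreal ((1/4)^j)"
  shows "mean_cost N x0 (\<lambda>i t \<omega>. lim (\<lambda>j. z j i t \<omega>)) \<le> liminf (\<lambda>j. mean_cost N x0 (z j))"
proof -
  have "player_cost (x0 i) (\<lambda>t \<omega>. lim (\<lambda>j. z j i t \<omega>)) \<le> liminf (\<lambda>j. player_cost (x0 i) (z j i))"
    if "i < N" for i
  proof -
    have "energy (\<lambda>t \<omega>. z j i t \<omega> - z (Suc j) i t \<omega>) \<le> ennreal ((1/4)^j)" for j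
      using order_trans[OF energy_le_total_energy[OF that] increments] by simp
    from fast_Cauchy_limit(2,3)[OF admissible_HF[OF z that] this]
    show ?thesis
      by (rule player_cost_lsc[where z="\<lambda>j. z j i", OF admissible_HF[OF z that]])
  qed
  then have "(\<Sum>i<N. player_cost (x0 i) (\<lambda>t \<omega>. lim (\<lambda>j. z j i t \<omega>)))
      \<le> liminf (\<lambda>j. \<Sum>i<N. player_cost (x0 i) (z j i))"
    by (intro order_trans[OF sum_mono liminf_sum_ennreal]) auto
  then show ?thesis
    unfolding mean_cost_def liminf_cmult_ennreal[OF ennreal_less_top]
    by (intro mult_left_mono) auto
qed

lemma INF_mean_cost_finite:
  assumes "0 < N" and Q: "Q \<in> HF M B T"
    and "\<And>v. l v \<le> b * (1 + v\<^sup>2)" "\<And>x. \<Psi> x \<le> C * (1 + x\<^sup>2)" "0 \<le> b" "0 \<le> C"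
  shows "(INF v\<in>{v. admissible M B T N Q v}. mean_cost N x0 v) < \<infinity>"
  using admissible_const[OF assms(1,2)] mean_cost_const_finite[OF Q assms(3-)]
  by (blast intro: INF_lower order_le_less_trans)

lemma fast_minimizing_controls:
  fixes N :: nat and x0 :: "nat \<Rightarrow> real" and B Q :: "real \<Rightarrow> 'a \<Rightarrow> real"
  defines "m \<equiv> INF w\<in>{w. admissible M B T N Q w}. mean_cost N x0 w"
  assumes N: "0 < N" and Q: "Q \<in> HF M B T"
    and l_convex: "convex_on UNIV l" and Psi_convex: "convex_on UNIV \<Psi>"
    and l_growth: "\<And>v. l v \<le> b * (1 + v\<^sup>2)" and Psi_growth: "\<And>x. \<Psi> x \<le> C * (1 + x\<^sup>2)"
    and "0 \<le> b" "0 \<le> C"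
    and coercive: "\<And>v. \<alpha> * v\<^sup>2 - \<beta> \<le> l v" and "0 < \<alpha>" "0 \<le> \<beta>"
  obtains z K where "\<And>j. admissible M B T N Q (z j)"
    and "\<And>j. mean_cost N x0 (z j) \<le> m + ennreal (1 / Suc j)"
    and "\<And>j. total_energy N (\<lambda>i t \<omega>. z j i t \<omega> - z (Suc j) i t \<omega>) \<le> ennreal ((1/4)^j)"
    and "\<And>j. total_energy N (z j) \<le> ennreal K"
proof -
  let ?A = "{w. admissible M B T N Q w}"
  have "m < \<infinity>"
    unfolding m_def using INF_mean_cost_finite[OF N Q l_growth Psi_growth] assms(8,9) .
  then obtain mr where m_eq: "m = ennreal mr" and "0 \<le> mr"
    by (cases m) auto
  show thesis
  proof (rule fast_minimizing_sequence[where A = ?A and J = "mean_cost N x0"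
        and mid = control_midpoint and Nm = "total_energy N"
        and Dist = "\<lambda>u w. total_energy N (\<lambda>i t \<omega>. u i t \<omega> - w i t \<omega>)"
        and K = "real N * ((mr + 1) + \<beta> * T) / \<alpha>", folded m_def])
    show "control_midpoint u w \<in> ?A" if "u \<in> ?A" "w \<in> ?A" for u w
      using admissible_midpoint that by simp
    show "2 * mean_cost N x0 (control_midpoint u w) \<le> mean_cost N x0 u + mean_cost N x0 w"
      if "u \<in> ?A" "w \<in> ?A" for u w
    proof -
      have "admissible M B T N Q u" "admissible M B T N Q w"
        and "convex_on UNIV (\<lambda>v. l v - 0 / 2 * v\<^sup>2)"
        using that l_convex by simp_all
      from mean_cost_midpoint[OF this order_refl Psi_convex, of x0] show ?thesis
        by simp
    qed
    show "total_energy N (\<lambda>i t \<omega>. u i t \<omega> - w i t \<omega>) + 4 * total_energy N (control_midpoint u w)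
        = 2 * total_energy N u + 2 * total_energy N w" if "u \<in> ?A" "w \<in> ?A" for u w
      using total_energy_parallelogram that by simp
    show "total_energy N u \<le> ennreal (real N * ((mr + 1) + \<beta> * T) / \<alpha>)"
      if "u \<in> ?A" "mean_cost N x0 u \<le> m + 1" for u
    proof -
      have "admissible M B T N Q u" "mean_cost N x0 u \<le> ennreal (mr + 1)"
        using that \<open>0 \<le> mr\<close> unfolding m_eq by simp_all
      from total_energy_le_mean_cost[OF this(1) N coercive \<open>0 < \<alpha>\<close> \<open>0 \<le> \<beta>\<close> this(2)] show ?thesis
        using \<open>0 \<le> mr\<close> by simp
    qed
  qed (fact \<open>m < \<infinity>\<close>, rule that, auto)
qed

lemma exists_optimal_control:
  assumes "0 < N" and "Q \<in> HF M B T"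
    and "convex_on UNIV l" and "convex_on UNIV \<Psi>"
    and "\<And>v. l v \<le> b * (1 + v\<^sup>2)" and "\<And>x. \<Psi> x \<le> C * (1 + x\<^sup>2)" and "0 \<le> b" "0 \<le> C"
    and "\<And>v. \<alpha> * v\<^sup>2 - \<beta> \<le> l v" and "0 < \<alpha>" "0 \<le> \<beta>"
  obtains v where "admissible M B T N Q v"
    and "mean_cost N x0 v = (INF w\<in>{w. admissible M B T N Q w}. mean_cost N x0 w)"
proof -
  define m where "m = (INF w\<in>{w. admissible M B T N Q w}. mean_cost N x0 w)"
  obtain z K where z: "\<And>j. admissible M B T N Q (z j)"
    "\<And>j. mean_cost N x0 (z j) \<le> m + ennreal (1 / Suc j)"
    "\<And>j. total_energy N (\<lambda>i t \<omega>. z j i t \<omega> - z (Suc j) i t \<omega>) \<le> ennreal ((1/4)^j)"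
    "\<And>j. total_energy N (z j) \<le> ennreal K"
    using fast_minimizing_controls[OF assms, of x0, folded m_def] by blast
  define v where "v = (\<lambda>i t \<omega>. lim (\<lambda>j. z j i t \<omega>))"
  have v_admissible: "admissible M B T N Q v"
    unfolding v_def using z(1,3,4) by (rule admissible_limit)
  have "mean_cost N x0 v \<le> liminf (\<lambda>j. mean_cost N x0 (z j))"
    unfolding v_def using z(1,3) by (rule mean_cost_limit_le_liminf)
  also have "\<dots> \<le> m"
    using z(2) by (rule liminf_le_if_le_plus_inverse)
  finally have "mean_cost N x0 v \<le> m" .
  moreover have "m \<le> mean_cost N x0 v"
    unfolding m_def using v_admissible by (intro INF_lower) simp
  ultimately show thesis
    using that v_admissible unfolding m_def by simp
qed

lemma optimal_control_unique:
  assumes N: "0 < N" and u: "admissible M B T N Q u" and w: "admissible M B T N Q w"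
    and l_convex: "convex_on UNIV (\<lambda>v. l v - \<theta> / 2 * v\<^sup>2)" and "0 < \<theta>"
    and Psi_convex: "convex_on UNIV \<Psi>"
    and u_optimal: "mean_cost N x0 u = (INF v\<in>{v. admissible M B T N Q v}. mean_cost N x0 v)"
    and w_optimal: "mean_cost N x0 w = mean_cost N x0 u"
    and finite: "mean_cost N x0 u < \<infinity>"
  shows "\<forall>i<N. AE p in tP M T. w i (fst p) (snd p) = u i (fst p) (snd p)"
proof -
  let ?D = "ennreal (1 / real N) * (ennreal (\<theta> / 4) * total_energy N (\<lambda>i t \<omega>. u i t \<omega> - w i t \<omega>))"
  have "2 * mean_cost N x0 u \<le> 2 * mean_cost N x0 (control_midpoint u w)"
    unfolding u_optimal using admissible_midpoint[OF u w] by (intro mult_left_mono INF_lower) auto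
  then have "2 * mean_cost N x0 u + ?D \<le> 2 * mean_cost N x0 (control_midpoint u w) + ?D"
    by (rule add_right_mono)
  also have "\<dots> \<le> mean_cost N x0 u + mean_cost N x0 w"
    using mean_cost_midpoint[OF u w l_convex _ Psi_convex, of x0] \<open>0 < \<theta>\<close> by simp
  also have "\<dots> = 2 * mean_cost N x0 u + 0"
    unfolding w_optimal by (simp add: mult_2)
  moreover have "2 * mean_cost N x0 u \<noteq> \<infinity>"
    using finite by (simp add: ennreal_mult_eq_top_iff)
  ultimately have "?D = 0"
    by (simp add: ennreal_add_left_cancel_le)
  then have "total_energy N (\<lambda>i t \<omega>. u i t \<omega> - w i t \<omega>) = 0"
    using N \<open>0 < \<theta>\<close> by simp
  show ?thesis
  proof (intro allI impI)
    fix i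
    assume "i < N"
    then have "energy (\<lambda>t \<omega>. u i t \<omega> - w i t \<omega>) = 0"
      using \<open>total_energy N _ = 0\<close> by (simp add: total_energy_def)
    moreover have "(\<lambda>p. u i (fst p) (snd p) - w i (fst p) (snd p)) \<in> borel_measurable (tP M T)"
      using HF_measurable(2)[OF admissible_HF[OF u \<open>i < N\<close>]]
        HF_measurable(2)[OF admissible_HF[OF w \<open>i < N\<close>]] by measurable
    ultimately have "AE p in tP M T. ennreal ((u i (fst p) (snd p) - w i (fst p) (snd p))\<^sup>2) = 0"
      unfolding energy_def by (subst (asm) nn_integral_0_iff_AE) auto
    then show "AE p in tP M T. w i (fst p) (snd p) = u i (fst p) (snd p)"
      by eventually_elim simp
  qed
qed

end

lemma finite_horizon_if_brownian_motion: "brownian_motion M T B \<Longrightarrow> finite_horizon M T"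
  by (simp add: brownian_motion_def finite_horizon_def finite_horizon_axioms_def)

lemma (in finite_horizon) control_problem_if_differentiable:
  assumes "\<And>p. ((\<lambda>q. L (fst q) (snd q)) has_derivative L' p) (at p)"
    and "\<And>x. (\<Psi> has_real_derivative \<Psi>' x) (at x)"
    and "\<And>x v. 0 \<le> L x v" and "\<And>x. 0 \<le> \<Psi> x"
  shows "control_problem M T (L 0) \<Psi>"
proof
  have "continuous_on UNIV (\<lambda>p. L (fst p) (snd p))"
    using has_derivative_continuous[OF assms(1)] by (simp add: continuous_at_imp_continuous_on)
  from continuous_on_compose2[OF this, of UNIV "\<lambda>v. (0, v)"] show "continuous_on UNIV (L 0)"
    by (simp add: continuous_on_Pair continuous_on_const continuous_on_id)
  show "continuous_on UNIV \<Psi>"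
    using DERIV_isCont[OF assms(2)] by (simp add: continuous_at_imp_continuous_on)
qed (use assms(3,4) in auto)

theorem proposition4p1:
  fixes M :: "'a measure" and B :: "real \<Rightarrow> 'a \<Rightarrow> real" and T :: real and N :: nat
    and Q :: "real \<Rightarrow> 'a \<Rightarrow> real" and x0 :: "nat \<Rightarrow> real"
    and L Lx Lv :: "real \<Rightarrow> real \<Rightarrow> real" and \<Psi> \<Psi>' :: "real \<Rightarrow> real"
  assumes BM: "brownian_motion M T B"
    and N: "0 < N"
    and Q: "Q \<in> HF M B T"
    and L_deriv: "\<And>p. ((\<lambda>q. L (fst q) (snd q)) has_derivative
                     (\<lambda>h. Lx (fst p) (snd p) * fst h + Lv (fst p) (snd p) * snd h)) (at p)"
    and Lx_cont: "continuous_on UNIV (\<lambda>p. Lx (fst p) (snd p))"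
    and Lv_cont: "continuous_on UNIV (\<lambda>p. Lv (fst p) (snd p))"
    and L_nonneg: "\<And>x v. 0 \<le> L x v"
    and L_convex: "convex_on UNIV (\<lambda>p. L (fst p) (snd p))"
    and Psi_deriv: "\<And>x. (\<Psi> has_real_derivative \<Psi>' x) (at x)"
    and Psi'_cont: "continuous_on UNIV \<Psi>'"
    and Psi_nonneg: "\<And>x. 0 \<le> \<Psi> x"
    and Psi_convex: "convex_on UNIV \<Psi>"
    and Psi_growth: "\<exists>C Ct. 0 < C \<and> 0 < Ct \<and>
        (\<forall>x. \<Psi> x \<le> C * (1 + \<bar>x\<bar>\<^sup>2) \<and> \<bar>\<Psi>' x\<bar> \<le> Ct * (1 + \<bar>x\<bar>))"
    and L_growth: "\<exists>\<beta>t C. 0 < \<beta>t \<and> 0 < C \<and>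
        (\<forall>x v. L x v \<le> \<beta>t * (1 + \<bar>v\<bar>\<^sup>2) \<and> \<bar>Lx x v\<bar> \<le> C * (1 + \<bar>v\<bar>)
               \<and> \<bar>Lv x v\<bar> \<le> C * (1 + \<bar>v\<bar>))"
    and L_coercive: "\<exists>\<alpha> \<beta>. 0 < \<alpha> \<and> 0 \<le> \<beta> \<and> (\<forall>x v. \<alpha> * \<bar>v\<bar>\<^sup>2 - \<beta> \<le> L x v)"
  shows "\<exists>vs. admissible M B T N Q vs \<and>
           cost M T N L \<Psi> x0 vs = (INF w\<in>{w. admissible M B T N Q w}. cost M T N L \<Psi> x0 w) \<and>
           ((\<exists>\<theta>>0. \<forall>x. convex_on UNIV (\<lambda>v. L x v - \<theta> / 2 * \<bar>v\<bar>\<^sup>2)) \<longrightarrow>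
              (\<forall>w. admissible M B T N Q w \<and> cost M T N L \<Psi> x0 w = cost M T N L \<Psi> x0 vs \<longrightarrow>
                 (\<forall>i<N. AE p in tP M T. w i (fst p) (snd p) = vs i (fst p) (snd p))))"
proof -
  interpret finite_horizon M T
    using BM by (rule finite_horizon_if_brownian_motion)
  \<comment> \<open>The differentiability hypotheses are used only for continuity of \<open>L\<close> and \<open>\<Psi>\<close>.\<close>
  interpret control_problem M T "L 0" \<Psi>
    using L_deriv Psi_deriv L_nonneg Psi_nonneg by (rule control_problem_if_differentiable)
  obtain b Cl where "0 < b" and L_le: "\<And>x v. L x v \<le> b * (1 + v\<^sup>2)"
    using L_growth by auto
  obtain C Ct where "0 < C" and Psi_le: "\<And>x. \<Psi> x \<le> C * (1 + x\<^sup>2)"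
    using Psi_growth by auto
  obtain \<alpha> \<beta> where "0 < \<alpha>" "0 \<le> \<beta>" and coercive: "\<And>v. \<alpha> * v\<^sup>2 - \<beta> \<le> L 0 v"
    using L_coercive by auto
  have cost: "cost M T N L \<Psi> x0 = mean_cost N x0"
    using convex_on_bounded_above_independent_fst[OF L_convex L_le] by (rule cost_eq_mean_cost)
  obtain vs where vs: "admissible M B T N Q vs"
    "mean_cost N x0 vs = (INF w\<in>{w. admissible M B T N Q w}. mean_cost N x0 w)"
    using exists_optimal_control[OF N Q convex_on_slices(2)[OF L_convex] Psi_convex L_le Psi_le _ _
        coercive \<open>0 < \<alpha>\<close> \<open>0 \<le> \<beta>\<close>] \<open>0 < b\<close> \<open>0 < C\<close> by auto
  have vs_finite: "mean_cost N x0 vs < \<infinity>"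
    unfolding vs(2) using INF_mean_cost_finite[OF N Q L_le Psi_le] \<open>0 < b\<close> \<open>0 < C\<close> by simp
  have "\<forall>i<N. AE p in tP M T. w i (fst p) (snd p) = vs i (fst p) (snd p)"
    if "\<exists>\<theta>>0. \<forall>x. convex_on UNIV (\<lambda>v. L x v - \<theta> / 2 * \<bar>v\<bar>\<^sup>2)"
      and "admissible M B T N Q w" and "mean_cost N x0 w = mean_cost N x0 vs" for w
  proof -
    from that(1) obtain \<theta> where "0 < \<theta>" and "convex_on UNIV (\<lambda>v. L 0 v - \<theta> / 2 * \<bar>v\<bar>\<^sup>2)"
      by blast
    then show ?thesis
      using optimal_control_unique[OF N vs(1) that(2) _ _ Psi_convex vs(2) that(3) vs_finite]
      by simp
  qed
  then show ?thesis
    unfolding cost using vs by blast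
qed

end
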